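(* Let $(\mathbf X_1,\mathbf Y_1)$ and $(\mathbf X_2,\mathbf Y_2)$ be general correlated sources, both uniformly integrable, and let $(\mathbf X,\mathbf Y)$ be their mixture $P_{X^nY^n}=\alpha_1P_{X_1^nY_1^n}+\alpha_2P_{X_2^nY_2^n}$ with constants $\alpha_1,\alpha_2>0$, $\alpha_1+\alpha_2=1$. Assume $\underline D(\mathbf X_1\Vert\mathbf X_2)>0$ and $\underline D(\mathbf X_2\Vert\mathbf X_1)>0$. Then \[\overline H_s(\mathbf X|\mathbf Y)=\lim_{\varepsilon\downarrow0}\limsup_{n\to\infty}\sum_{i=1,2}\frac{\alpha_i}{n}\overline H_s^\varepsilon(X_i^n|Y_i^n).\]
   Context: A general correlated source $\{(X^n,Y^n)\}_{n\ge1}$ is an arbitrary sequence of pairs of random variables on $\mathcal X^n\times\mathcal Y^n$, $\mathcal X,\mathcal Y$ finite or countably infinite (no structural assumptions; marginal probabilities positive). Logs base 2. A source is uniformly integrable if $Z_n=\frac1n\log\frac1{P_{X^n|Y^n}(X^n|Y^n)}$ satisfies $\lim_{u\to\infty}\sup_n\sum_{z:|z|\ge u}P_{Z_n}(z)|z|=0$. Spectral inf-divergence rate: $\underline D(\mathbf X_1\Vert\mathbf X_2)=\sup\{\beta:\lim_n\Pr\{\frac1n\log\frac{P_{X_1^n}(X_1^n)}{P_{X_2^n}(X_1^n)}<\beta\}=0\}$, where $X_1^n\sim P_{X_1^n}$ and $P_{X_i^n}$ are the $\mathcal X^n$-marginals. For a source with distributions $P_{X^nY^n}$, $x^n$ and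 $\varepsilon\in(0,1]$: $\overline h^\varepsilon(x^n|P_{X^nY^n})=\inf\{a\in\mathbb R:\sum_{y^n:\log(1/P_{X^n|Y^n}(x^n|y^n))>a}P_{Y^n|X^n}(y^n|x^n)\le\varepsilon\}$; $\overline H_s^\varepsilon(X^n|Y^n)=\sum_{x^n}P_{X^n}(x^n)\overline h^\varepsilon(x^n|P_{X^nY^n})$ (analogously for $(X_i^n,Y_i^n)$); $\overline H_s(\mathbf X|\mathbf Y)=\lim_{\varepsilon\downarrow0}\limsup_n\frac1n\overline H_s^\varepsilon(X^n|Y^n)$. *)

theory Defs
  imports "HOL-Probability.Probability" "HOL-Library.Liminf_Limsup"
begin

definition gen_source :: "(nat \<Rightarrow> ('a list \<times> 'b list) pmf) \<Rightarrow> bool" where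
  "gen_source P \<longleftrightarrow> (\<forall>n.
     set_pmf (P n) \<subseteq> {(x, y). length x = n \<and> length y = n} \<and>
     (\<forall>x. length x = n \<longrightarrow> pmf (map_pmf fst (P n)) x > 0) \<and>
     (\<forall>y. length y = n \<longrightarrow> pmf (map_pmf snd (P n)) y > 0))"

definition condXY :: "(nat \<Rightarrow> ('a list \<times> 'b list) pmf) \<Rightarrow> nat \<Rightarrow> 'a list \<Rightarrow> 'b list \<Rightarrow> real" where
  "condXY P n x y = pmf (P n) (x, y) / pmf (map_pmf snd (P n)) y"

definition condYX :: "(nat \<Rightarrow> ('a list \<times> 'b list) pmf) \<Rightarrow> nat \<Rightarrow> 'a list \<Rightarrow> 'b list \<Rightarrow> real" where
  "condYX P n x y = pmf (P n) (x, y) / pmf (map_pmf fst (P n)) x"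

definition Zrv :: "(nat \<Rightarrow> ('a list \<times> 'b list) pmf) \<Rightarrow> nat \<Rightarrow> 'a list \<times> 'b list \<Rightarrow> real" where
  "Zrv P n xy = (1 / real n) * log 2 (1 / condXY P n (fst xy) (snd xy))"

definition unif_integrable :: "(nat \<Rightarrow> ('a list \<times> 'b list) pmf) \<Rightarrow> bool" where
  "unif_integrable P \<longleftrightarrow>
     ((\<lambda>u::real. SUP n\<in>{1..}. \<integral>\<^sup>+ z. ennreal (\<bar>z\<bar> * indicator {z. \<bar>z\<bar> \<ge> u} z)
          \<partial>measure_pmf (map_pmf (Zrv P n) (P n))) \<longlongrightarrow> 0) at_top"

text \<open>Spectral inf-divergence rate of the X-marginals (extended real, so sup of an
  empty/unbounded set is handled correctly).\<close>

definition spec_inf_div :: "(nat \<Rightarrow> ('a list \<times> 'b list) pmf) \<Rightarrow> (nat \<Rightarrow> ('a list \<times> 'c list) pmf) \<Rightarrow> ereal" where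
  "spec_inf_div P1 P2 = Sup (ereal ` {\<beta>.
     (\<lambda>n. measure_pmf.prob (map_pmf fst (P1 n))
        {x. (1 / real n) * log 2 (pmf (map_pmf fst (P1 n)) x / pmf (map_pmf fst (P2 n)) x) < \<beta>})
     \<longlonglongrightarrow> 0})"

definition h_up :: "(nat \<Rightarrow> ('a list \<times> 'b list) pmf) \<Rightarrow> nat \<Rightarrow> real \<Rightarrow> 'a list \<Rightarrow> real" where
  "h_up P n \<epsilon> x = Inf {a::real.
     infsum (\<lambda>y. condYX P n x y) {y. log 2 (1 / condXY P n x y) > a} \<le> \<epsilon>}"

definition H_s_eps :: "(nat \<Rightarrow> ('a list \<times> 'b list) pmf) \<Rightarrow> nat \<Rightarrow> real \<Rightarrow> ennreal" where
  "H_s_eps P n \<epsilon> = (\<integral>\<^sup>+ x. ennreal (h_up P n \<epsilon> x) \<partial>measure_pmf (map_pmf fst (P n)))"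

definition H_s :: "(nat \<Rightarrow> ('a list \<times> 'b list) pmf) \<Rightarrow> ennreal" where
  "H_s P = Lim (at_right 0) (\<lambda>\<epsilon>. limsup (\<lambda>n. ennreal (1 / real n) * H_s_eps P n \<epsilon>))"

end

theory Submission
  imports Defs
begin

text \<open>
  The \<open>\<epsilon>\<close>-spectral entropy of the mixture splits as \<open>\<alpha>\<^sub>1 H\<^sub>1 + \<alpha>\<^sub>2 H\<^sub>2\<close>, where \<open>H\<^sub>i\<close> averages the
  quantile \<open>h\<^sup>\<epsilon>(x|P)\<close> of the mixture over the \<open>X\<close>-marginal of the \<open>i\<close>-th component. Since the
  spectral divergence is positive, outside a set of vanishing \<open>P\<^sub>1\<close>-probability the second
  component is exponentially negligible at \<open>x\<close>; there the conditional laws of \<open>Y\<close> given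
  \<open>x\<close> under the mixture and under \<open>P\<^sub>1\<close> have information densities differing by \<open>O(1)\<close>
  except on a set of small conditional mass, so their quantiles agree up to \<open>O(1)\<close> after
  replacing \<open>\<epsilon>\<close> by \<open>\<epsilon>/3\<close>. On the exceptional \<open>x\<close> the quantiles are bounded by Markov's
  inequality, and uniform integrability of the information density makes their contribution
  \<open>o(n)\<close>. After normalising by \<open>n\<close> the two sides are interleaved under \<open>\<epsilon> \<mapsto> \<epsilon>/3\<close>; being
  antitone in \<open>\<epsilon>\<close>, they have the same limit as \<open>\<epsilon> \<down> 0\<close>.
\<close>

lemma nn_integral_count_space_pair:
  fixes f :: "'a::countable \<times> 'b::countable \<Rightarrow> ennreal"
  shows "(\<integral>\<^sup>+ z. f z \<partial>count_space UNIV) = (\<integral>\<^sup>+ x. \<integral>\<^sup>+ y. f (x, y) \<partial>count_space UNIV \<partial>count_space UNIV)"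
proof -
  interpret sigma_finite_measure "count_space (UNIV::'b set)"
    by (rule sigma_finite_measure_count_space)
  have "(\<integral>\<^sup>+ z. f z \<partial>count_space UNIV) = (\<integral>\<^sup>+ z. f z \<partial>(count_space UNIV \<Otimes>\<^sub>M count_space UNIV))"
    by (rule nn_integral_count_space_prod_eq[symmetric])
  also have "\<dots> = (\<integral>\<^sup>+ x. \<integral>\<^sup>+ y. f (x, y) \<partial>count_space UNIV \<partial>count_space UNIV)"
    by (rule nn_integral_fst[symmetric]) (simp add: pair_measure_countable)
  finally show ?thesis .
qed

lemma ennreal_pmf_fst_eq_nn_integral:
  fixes p :: "('a::countable \<times> 'b::countable) pmf"
  shows "ennreal (pmf (map_pmf fst p) x) = (\<integral>\<^sup>+ y. ennreal (pmf p (x, y)) \<partial>count_space UNIV)"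
proof -
  have "ennreal (pmf (map_pmf fst p) x) = (\<integral>\<^sup>+ z. ennreal (pmf p z) * indicator (fst -` {x}) z \<partial>count_space UNIV)"
    by (simp add: ennreal_pmf_map nn_integral_measure_pmf)
  also have "\<dots> = (\<integral>\<^sup>+ x'. indicator {x} x' * (\<integral>\<^sup>+ y. ennreal (pmf p (x', y)) \<partial>count_space UNIV) \<partial>count_space UNIV)"
    by (subst nn_integral_count_space_pair, rule nn_integral_cong) (auto split: split_indicator)
  finally show ?thesis
    by (simp add: nn_integral_indicator_singleton mult.commute[of "indicator _ _"])
qed

lemma ennreal_pmf_snd_eq_nn_integral:
  fixes p :: "('a::countable \<times> 'b::countable) pmf"
  shows "ennreal (pmf (map_pmf snd p) y) = (\<integral>\<^sup>+ x. ennreal (pmf p (x, y)) \<partial>count_space UNIV)"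
proof -
  have "ennreal (pmf (map_pmf snd p) y) = (\<integral>\<^sup>+ z. ennreal (pmf p z) * indicator (snd -` {y}) z \<partial>count_space UNIV)"
    by (simp add: ennreal_pmf_map nn_integral_measure_pmf)
  also have "\<dots> = (\<integral>\<^sup>+ x. \<integral>\<^sup>+ y'. ennreal (pmf p (x, y')) * indicator {y} y' \<partial>count_space UNIV \<partial>count_space UNIV)"
    by (subst nn_integral_count_space_pair, intro nn_integral_cong) (auto split: split_indicator)
  finally show ?thesis
    by (simp add: nn_integral_indicator_singleton)
qed

lemma pmf_le_pmf_fst: "pmf p (x, y) \<le> pmf (map_pmf fst p) x"
  by (simp add: pmf_map measure_pmf_single[symmetric] measure_pmf.finite_measure_mono)

lemma pmf_le_pmf_snd: "pmf p (x, y) \<le> pmf (map_pmf snd p) y"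
  by (simp add: pmf_map measure_pmf_single[symmetric] measure_pmf.finite_measure_mono)

lemma nn_integral_pmf_UNIV: "(\<integral>\<^sup>+ z. ennreal (pmf (p :: 'a::countable pmf) z) \<partial>count_space UNIV) = 1"
  by (simp add: nn_integral_pmf)

lemma nn_integral_pmf_indicator:
  "(\<integral>\<^sup>+ x. ennreal (pmf p x) * indicator T x \<partial>count_space UNIV) = ennreal (measure_pmf.prob p T)"
  by (simp add: nn_integral_count_space_indicator[symmetric] nn_integral_pmf measure_pmf.emeasure_eq_measure)

lemma nn_integral_pmf_times_snd:
  fixes p :: "('a::countable \<times> 'b::countable) pmf"
  shows "(\<integral>\<^sup>+ x. \<integral>\<^sup>+ y. ennreal (pmf p (x, y)) * f y \<partial>count_space UNIV \<partial>count_space UNIV)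
    = (\<integral>\<^sup>+ y. ennreal (pmf (map_pmf snd p) y) * f y \<partial>count_space UNIV)"
  by (subst nn_integral_count_space_nn_integral) (simp_all add: ennreal_pmf_snd_eq_nn_integral nn_integral_multc)

lemma ennreal_infsum_eq_nn_integral:
  fixes f :: "'b \<Rightarrow> real"
  assumes "\<And>y. 0 \<le> f y" "(\<integral>\<^sup>+ y. ennreal (f y) \<partial>count_space UNIV) < \<infinity>"
  shows "ennreal (infsum f S) = (\<integral>\<^sup>+ y. ennreal (f y) * indicator S y \<partial>count_space UNIV)"
proof -
  have "(\<integral>\<^sup>+ y. ennreal (f y) \<partial>count_space S) \<le> (\<integral>\<^sup>+ y. ennreal (f y) \<partial>count_space UNIV)"
    by (subst nn_integral_count_space_indicator) (auto intro!: nn_integral_mono split: split_indicator)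
  then have int: "integrable (count_space S) f"
    by (intro integrableI_bounded) (use assms in auto)
  then have "ennreal (infsum f S) = ennreal (infsetsum f S)"
    by (simp add: infsetsum_infsum Infinite_Set_Sum.abs_summable_on_def)
  also have "\<dots> = (\<integral>\<^sup>+ y. ennreal (f y) \<partial>count_space S)"
    using int assms(1) by (simp add: nn_integral_conv_infsetsum Infinite_Set_Sum.abs_summable_on_def)
  also have "\<dots> = (\<integral>\<^sup>+ y. ennreal (f y) * indicator S y \<partial>count_space UNIV)"
    by (rule nn_integral_count_space_indicator) simp
  finally show ?thesis .
qed

lemma nn_integral_ratio_exceeds_le:
  assumes "\<And>y. 0 \<le> w y" and "\<And>y. 0 \<le> v y"
    and "(\<integral>\<^sup>+ y. ennreal (w y) \<partial>count_space UNIV) = ennreal m" and "0 < m" and "0 \<le> mv"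
  shows "(\<integral>\<^sup>+ y. ennreal (v y) * indicator {y. v y * m * 2 powr c < w y * mv} y \<partial>count_space UNIV)
    \<le> ennreal (2 powr (-c) * mv)"
proof -
  have "(\<integral>\<^sup>+ y. ennreal (v y) * indicator {y. v y * m * 2 powr c < w y * mv} y \<partial>count_space UNIV)
      \<le> (\<integral>\<^sup>+ y. ennreal (2 powr (-c) * mv / m) * ennreal (w y) \<partial>count_space UNIV)"
  proof (intro nn_integral_mono)
    fix y
    have "v y \<le> 2 powr (-c) * mv / m * w y" if "v y * m * 2 powr c < w y * mv"
      using that \<open>0 < m\<close> by (simp add: powr_minus field_simps)
    then show "ennreal (v y) * indicator {y. v y * m * 2 powr c < w y * mv} y \<le> ennreal (2 powr (-c) * mv / m) * ennreal (w y)"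
      using assms by (auto simp: ennreal_mult[symmetric] split: split_indicator)
  qed
  also have "\<dots> = ennreal (2 powr (-c) * mv / m) * ennreal m"
    by (simp add: nn_integral_cmult assms(3))
  also have "\<dots> = ennreal (2 powr (-c) * mv)"
    using assms(4,5) by (simp add: ennreal_mult[symmetric])
  finally show ?thesis .
qed

lemma ennreal_mult_le_iff_le_times:
  assumes "0 < (c::real)" "0 \<le> e"
  shows "ennreal (1 / c) * T \<le> ennreal e \<longleftrightarrow> T \<le> ennreal (e * c)"
proof -
  have "ennreal (1 / c) * T \<le> ennreal e \<longleftrightarrow> ennreal c * (ennreal (1 / c) * T) \<le> ennreal c * ennreal e"
    using assms by (simp add: ennreal_mult_le_mult_iff)
  also have "ennreal c * (ennreal (1 / c) * T) = T"
    using assms by (simp add: mult.assoc[symmetric] ennreal_mult[symmetric])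
  finally show ?thesis
    using assms by (simp add: ennreal_mult mult.commute)
qed

lemma ennreal_plus_le: "ennreal (a + b) \<le> ennreal a + ennreal b"
  by (simp add: ennreal_plus_if ennreal_leI)

lemma nn_integral_split_good_set:
  fixes wt :: "'x::countable \<Rightarrow> real"
  assumes good: "\<And>x. x \<in> G \<Longrightarrow> f x \<le> g x + K" and K: "0 \<le> K"
    and total: "(\<integral>\<^sup>+ x. ennreal (wt x) \<partial>count_space UNIV) \<le> 1"
  shows "(\<integral>\<^sup>+ x. ennreal (wt x) * ennreal (f x) \<partial>count_space UNIV)
    \<le> (\<integral>\<^sup>+ x. ennreal (wt x) * ennreal (g x) \<partial>count_space UNIV) + ennreal K
      + (\<integral>\<^sup>+ x. ennreal (wt x) * indicator (- G) x * ennreal (f x) \<partial>count_space UNIV)"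
proof -
  have "ennreal (wt x) * ennreal (f x)
      \<le> ennreal (wt x) * ennreal (g x) + ennreal K * ennreal (wt x) + ennreal (wt x) * indicator (- G) x * ennreal (f x)" for x
  proof (cases "x \<in> G")
    case True
    have "ennreal (f x) \<le> ennreal (g x) + ennreal K"
      using ennreal_leI[OF good[OF True]] ennreal_plus_le order_trans by blast
    then show ?thesis
      using True by (simp add: mult_left_mono distrib_left[symmetric] mult.commute[of "ennreal K"])
  qed (simp add: add_increasing)
  then have "(\<integral>\<^sup>+ x. ennreal (wt x) * ennreal (f x) \<partial>count_space UNIV)
      \<le> (\<integral>\<^sup>+ x. ennreal (wt x) * ennreal (g x) + ennreal K * ennreal (wt x)
          + ennreal (wt x) * indicator (- G) x * ennreal (f x) \<partial>count_space UNIV)"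
    by (intro nn_integral_mono)
  also have "\<dots> = (\<integral>\<^sup>+ x. ennreal (wt x) * ennreal (g x) \<partial>count_space UNIV)
      + ennreal K * (\<integral>\<^sup>+ x. ennreal (wt x) \<partial>count_space UNIV)
      + (\<integral>\<^sup>+ x. ennreal (wt x) * indicator (- G) x * ennreal (f x) \<partial>count_space UNIV)"
    by (simp add: nn_integral_add nn_integral_cmult)
  also have "\<dots> \<le> (\<integral>\<^sup>+ x. ennreal (wt x) * ennreal (g x) \<partial>count_space UNIV) + ennreal K
      + (\<integral>\<^sup>+ x. ennreal (wt x) * indicator (- G) x * ennreal (f x) \<partial>count_space UNIV)"
    using mult_left_mono[OF total, of "ennreal K"] by (intro add_mono) auto
  finally show ?thesis .
qed

lemma ennreal_inverse_n_mult: "0 \<le> a \<Longrightarrow> ennreal (1 / real n) * (ennreal a * X) = ennreal (a / real n) * X"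
  by (simp add: mult.assoc[symmetric] ennreal_mult[symmetric])

lemma ennreal_inverse_n_mult_n: "1 \<le> n \<Longrightarrow> 0 \<le> \<eta> \<Longrightarrow> ennreal (1 / real n) * ennreal (real n * \<eta>) = ennreal \<eta>"
  by (simp add: ennreal_mult[symmetric])

lemma log2_le_twice: "0 < t \<Longrightarrow> log 2 t \<le> 2 * t"
proof -
  assume t: "0 < t"
  have "ln (1/2::real) \<le> 1/2 - 1"
    by (rule ln_le_minus_one) simp
  then have ln2: "1/2 \<le> ln (2::real)"
    by (simp add: ln_div)
  show ?thesis
  proof (cases "ln t \<le> 0")
    case True
    then have "ln t / ln 2 \<le> 0"
      by (intro divide_nonpos_pos) auto
    then show ?thesis
      using t by (simp add: log_def)
  next
    case False
    then have "ln t / ln 2 \<le> ln t / (1/2)"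
      using ln2 by (intro divide_left_mono) auto
    then show ?thesis
      using ln_bound[OF t] by (simp add: log_def)
  qed
qed

lemma eventually_affine_le_linear:
  fixes p :: "nat \<Rightarrow> real"
  assumes "p \<longlonglongrightarrow> 0" and "C < \<eta>"
  shows "\<forall>\<^sub>F n in sequentially. A + B * p n + real n * (B' * p n + C) \<le> real n * \<eta>"
proof -
  have "(\<lambda>n. A / real n + B * p n * (1 / real n) + (B' * p n + C)) \<longlonglongrightarrow> 0 + B * 0 * 0 + (B' * 0 + C)"
    by (intro tendsto_intros assms(1) lim_const_over_n)
  then have "\<forall>\<^sub>F n in sequentially. A / real n + B * p n * (1 / real n) + (B' * p n + C) < \<eta>"
    using assms(2) by (intro order_tendstoD(2)) auto
  with eventually_ge_at_top[of 1] show ?thesis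
  proof eventually_elim
    case (elim n)
    then have "real n * (A / real n + B * p n * (1 / real n) + (B' * p n + C)) \<le> real n * \<eta>"
      by (intro mult_left_mono) auto
    with elim(1) show ?case
      by (simp add: distrib_left)
  qed
qed

lemma eventually_powr_neg_le:
  assumes "0 < \<gamma>" "0 < t"
  shows "\<forall>\<^sub>F n in sequentially. 2 powr (- (real n * \<gamma>)) \<le> t"
proof -
  have "\<forall>\<^sub>F n in sequentially. - log 2 t / \<gamma> \<le> real n"
    using filterlim_real_sequentially unfolding filterlim_at_top by blast
  then show ?thesis
  proof eventually_elim
    case (elim n)
    then have "2 powr (- (real n * \<gamma>)) \<le> 2 powr (log 2 t)"
      using assms(1) by (intro powr_mono) (auto simp: field_simps)
    then show ?case
      using assms(2) by simp
  qed
qed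

lemma ex_powr_neg_le: "0 < (t::real) \<Longrightarrow> \<exists>c\<ge>0. 2 powr (- c) \<le> t"
  by (intro exI[of _ "max 0 (- log 2 t)"]) (auto intro: order_trans[OF powr_mono[of _ "log 2 t"]])

lemma Limsup_le_Limsup_of_eventually_le_plus:
  fixes g h :: "nat \<Rightarrow> ennreal"
  assumes "\<And>\<eta>. 0 < \<eta> \<Longrightarrow> \<forall>\<^sub>F n in sequentially. g n \<le> h n + ennreal \<eta>"
  shows "limsup g \<le> limsup h"
proof (rule ennreal_le_epsilon)
  fix \<eta> :: real
  assume "0 < \<eta>"
  have "limsup g \<le> limsup (\<lambda>n. ennreal \<eta> + h n)"
    using assms[OF \<open>0 < \<eta>\<close>] by (intro Limsup_mono) (simp add: add.commute)
  also have "\<dots> = ennreal \<eta> + limsup h"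
    by (rule Limsup_const_add) simp
  finally show "limsup g \<le> limsup h + ennreal \<eta>"
    by (simp add: add.commute)
qed

lemma Lim_at_right_0_eq_SUP:
  fixes f :: "real \<Rightarrow> ennreal"
  assumes antimono: "\<And>e e'. 0 < e \<Longrightarrow> e \<le> e' \<Longrightarrow> e' < 1 \<Longrightarrow> f e' \<le> f e"
  shows "Lim (at_right 0) f = (SUP e\<in>{0<..<1}. f e)"
proof (rule tendsto_Lim)
  show "(f \<longlongrightarrow> (SUP e\<in>{0<..<1}. f e)) (at_right 0)"
  proof (rule increasing_tendsto)
    show "\<forall>\<^sub>F e in at_right 0. f e \<le> (SUP e\<in>{0<..<1}. f e)"
      unfolding eventually_at_right_field by (intro exI[of _ 1]) (auto intro: SUP_upper)
    fix x
    assume "x < (SUP e\<in>{0<..<1}. f e)"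
    then obtain e0 where e0: "e0 \<in> {0<..<1}" "x < f e0"
      by (auto simp: less_SUP_iff)
    then have "x < f e" if "0 < e" "e < e0" for e
      using antimono[of e e0] that by (simp add: less_le_trans)
    then show "\<forall>\<^sub>F e in at_right 0. x < f e"
      unfolding eventually_at_right_field using e0 by auto
  qed
qed simp

lemma Lim_at_right_0_eq_of_interleaved:
  fixes F G :: "real \<Rightarrow> ennreal"
  assumes "\<And>e e'. 0 < e \<Longrightarrow> e \<le> e' \<Longrightarrow> e' < 1 \<Longrightarrow> F e' \<le> F e"
    and "\<And>e e'. 0 < e \<Longrightarrow> e \<le> e' \<Longrightarrow> e' < 1 \<Longrightarrow> G e' \<le> G e"
    and "\<And>e. 0 < e \<Longrightarrow> e < 1 \<Longrightarrow> F e \<le> G (e / 3)"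
    and "\<And>e. 0 < e \<Longrightarrow> e < 1 \<Longrightarrow> G e \<le> F (e / 3)"
  shows "Lim (at_right 0) F = Lim (at_right 0) G"
proof -
  have "F e \<le> (SUP e\<in>{0<..<1}. G e)" "G e \<le> (SUP e\<in>{0<..<1}. F e)" if "e \<in> {0<..<1}" for e
    using assms(3,4)[of e] SUP_upper[of "e / 3" "{0<..<1}" F] SUP_upper[of "e / 3" "{0<..<1}" G] that
    by (auto intro: order_trans)
  then have "(SUP e\<in>{0<..<1}. F e) \<le> (SUP e\<in>{0<..<1}. G e)" "(SUP e\<in>{0<..<1}. G e) \<le> (SUP e\<in>{0<..<1}. F e)"
    by (auto intro: SUP_least)
  then show ?thesis
    using Lim_at_right_0_eq_SUP[of F, OF assms(1)] Lim_at_right_0_eq_SUP[of G, OF assms(2)] by simp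
qed

section \<open>Tail quantiles of weighted scores\<close>

definition tail_mass :: "('b \<Rightarrow> real) \<Rightarrow> ('b \<Rightarrow> real) \<Rightarrow> real \<Rightarrow> ennreal" where
  "tail_mass w s a = (\<integral>\<^sup>+ y. ennreal (w y) * indicator {y. a < s y} y \<partial>count_space UNIV)"

text \<open>
  With weights \<open>P(x,\<cdot>)\<close>, scores the information density and total mass \<open>P\<^sub>X(x)\<close> this is
  \<open>h_up\<close> (see \<open>h_up_eq_tail_quantile\<close>); keeping the weights unnormalised lets mixture and
  component fibres be compared directly.
\<close>

definition tail_quantile :: "('b \<Rightarrow> real) \<Rightarrow> ('b \<Rightarrow> real) \<Rightarrow> real \<Rightarrow> real \<Rightarrow> real" where
  "tail_quantile w s m \<epsilon> = Inf {a. tail_mass w s a \<le> ennreal (\<epsilon> * m)}"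

lemma tail_mass_antimono: "a \<le> b \<Longrightarrow> tail_mass w s b \<le> tail_mass w s a"
  unfolding tail_mass_def by (intro nn_integral_mono) (auto split: split_indicator)

locale scored_weights =
  fixes w s :: "'b \<Rightarrow> real" and m :: real
  assumes weight_nonneg: "\<And>y. 0 \<le> w y" and score_nonneg: "\<And>y. 0 \<le> s y"
    and total_weight: "(\<integral>\<^sup>+ y. ennreal (w y) \<partial>count_space UNIV) = ennreal m"
    and total_pos: "0 < m"
begin

lemma tail_mass_le_total: "tail_mass w s a \<le> ennreal m"
  unfolding tail_mass_def total_weight[symmetric]
  by (intro nn_integral_mono) (auto split: split_indicator)

lemma ex_tail_mass_le:
  assumes "0 < \<epsilon>"
  shows "\<exists>a. tail_mass w s a \<le> ennreal (\<epsilon> * m)"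
proof -
  define f where "f = (\<lambda>(k::nat) y. ennreal (w y) * indicator {y. real k < s y} y)"
  have "decseq f"
    unfolding f_def by (rule decseq_SucI) (auto simp: le_fun_def split: split_indicator)
  moreover have "(\<integral>\<^sup>+ y. f i y \<partial>count_space UNIV) < \<infinity>" for i
    using tail_mass_le_total[of "real i"] unfolding f_def tail_mass_def by (simp add: le_less_trans)
  moreover have "(INF i. f i y) = 0" for y
  proof -
    obtain k :: nat where "s y < real k"
      using reals_Archimedean2 by blast
    then have "f k y = 0"
      unfolding f_def by auto
    then show ?thesis
      by (metis INF_lower UNIV_I le_zero_eq)
  qed
  ultimately have "(INF i. (\<integral>\<^sup>+ y. f i y \<partial>count_space UNIV)) = 0"
    by (subst nn_integral_monotone_convergence_INF_decseq[symmetric]) auto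
  then have "(INF i. (\<integral>\<^sup>+ y. f i y \<partial>count_space UNIV)) < ennreal (\<epsilon> * m)"
    using assms total_pos by simp
  then obtain i where "(\<integral>\<^sup>+ y. f i y \<partial>count_space UNIV) < ennreal (\<epsilon> * m)"
    by (auto simp: INF_less_iff)
  then show ?thesis
    unfolding f_def tail_mass_def by (intro exI[of _ "real i"]) simp
qed

lemma nonneg_if_tail_mass_le:
  assumes "\<epsilon> < 1" and "tail_mass w s a \<le> ennreal (\<epsilon> * m)"
  shows "0 \<le> a"
proof (rule ccontr)
  assume "\<not> 0 \<le> a"
  then have "a < s y" for y
    using score_nonneg[of y] by linarith
  then have "tail_mass w s a = ennreal m"
    unfolding tail_mass_def total_weight[symmetric] by simp
  moreover have "ennreal (\<epsilon> * m) < ennreal m"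
    using assms(1) total_pos by (intro ennreal_lessI) (auto simp: mult_less_cancel_right2)
  ultimately show False
    using assms(2) by simp
qed

lemma bdd_below_tail_mass_le: "\<epsilon> < 1 \<Longrightarrow> bdd_below {a. tail_mass w s a \<le> ennreal (\<epsilon> * m)}"
  using nonneg_if_tail_mass_le by (intro bdd_belowI[of _ 0]) auto

lemma tail_quantile_le:
  "\<epsilon> < 1 \<Longrightarrow> tail_mass w s a \<le> ennreal (\<epsilon> * m) \<Longrightarrow> tail_quantile w s m \<epsilon> \<le> a"
  unfolding tail_quantile_def by (intro cInf_lower bdd_below_tail_mass_le) auto

lemma tail_mass_above_tail_quantile:
  assumes "0 < \<epsilon>" "\<epsilon> < 1" "0 < \<delta>"
  shows "tail_mass w s (tail_quantile w s m \<epsilon> + \<delta>) \<le> ennreal (\<epsilon> * m)"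
proof -
  have "tail_quantile w s m \<epsilon> < tail_quantile w s m \<epsilon> + \<delta>"
    using assms by simp
  then obtain b where b: "tail_mass w s b \<le> ennreal (\<epsilon> * m)" "b < tail_quantile w s m \<epsilon> + \<delta>"
    using ex_tail_mass_le[OF assms(1)] bdd_below_tail_mass_le[OF assms(2)]
    unfolding tail_quantile_def by (subst (asm) cInf_less_iff) auto
  then show ?thesis
    using tail_mass_antimono[of b "tail_quantile w s m \<epsilon> + \<delta>" w s] by simp
qed

lemma tail_quantile_antimono:
  assumes "0 < \<epsilon>" "\<epsilon> \<le> \<epsilon>'" "\<epsilon>' < 1"
  shows "tail_quantile w s m \<epsilon>' \<le> tail_quantile w s m \<epsilon>"
  unfolding tail_quantile_def
proof (rule cInf_superset_mono)
  show "{a. tail_mass w s a \<le> ennreal (\<epsilon> * m)} \<noteq> {}"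
    using ex_tail_mass_le[OF assms(1)] by auto
  show "bdd_below {a. tail_mass w s a \<le> ennreal (\<epsilon>' * m)}"
    using bdd_below_tail_mass_le[OF assms(3)] .
  have "ennreal (\<epsilon> * m) \<le> ennreal (\<epsilon>' * m)"
    using assms total_pos by (intro ennreal_leI mult_right_mono) auto
  then show "{a. tail_mass w s a \<le> ennreal (\<epsilon> * m)} \<subseteq> {a. tail_mass w s a \<le> ennreal (\<epsilon>' * m)}"
    by (auto intro: order_trans)
qed

lemma tail_quantile_markov:
  assumes "0 < \<epsilon>" "\<epsilon> < 1"
  shows "ennreal (tail_quantile w s m \<epsilon>) \<le> (\<integral>\<^sup>+ y. ennreal (w y * s y) \<partial>count_space UNIV) / ennreal (\<epsilon> * m) + 1"
proof (cases "(\<integral>\<^sup>+ y. ennreal (w y * s y) \<partial>count_space UNIV)" rule: ennreal_cases)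
  case (real M)
  have em: "0 < \<epsilon> * m"
    using assms total_pos by simp
  define a where "a = M / (\<epsilon> * m) + 1"
  have a0: "0 < a"
    unfolding a_def using real em by (simp add: add_nonneg_pos)
  obtain t where t: "tail_mass w s a = ennreal t" "0 \<le> t"
    using tail_mass_le_total[of a] by (cases "tail_mass w s a" rule: ennreal_cases) (auto simp: top_unique)
  have "ennreal a * tail_mass w s a = (\<integral>\<^sup>+ y. ennreal a * (ennreal (w y) * indicator {y. a < s y} y) \<partial>count_space UNIV)"
    unfolding tail_mass_def by (simp add: nn_integral_cmult)
  also have "\<dots> \<le> (\<integral>\<^sup>+ y. ennreal (w y * s y) \<partial>count_space UNIV)"
  proof (intro nn_integral_mono)
    fix y
    have "a * w y \<le> w y * s y" if "a < s y"
      using that weight_nonneg[of y] by (simp add: mult.commute mult_right_mono)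
    then show "ennreal a * (ennreal (w y) * indicator {y. a < s y} y) \<le> ennreal (w y * s y)"
      using a0 weight_nonneg[of y] by (auto simp: ennreal_mult[symmetric] split: split_indicator)
  qed
  finally have "a * t \<le> M"
    using t a0 real by (simp add: ennreal_mult[symmetric])
  moreover have "a * (\<epsilon> * m) = M + \<epsilon> * m"
    unfolding a_def using assms(1) total_pos by (simp add: distrib_right)
  ultimately have "t \<le> \<epsilon> * m"
    using a0 em by (smt (verit) mult_le_cancel_left_pos)
  then have "tail_quantile w s m \<epsilon> \<le> a"
    using t assms by (intro tail_quantile_le) auto
  then have "ennreal (tail_quantile w s m \<epsilon>) \<le> ennreal a"
    by (rule ennreal_leI)
  also have "\<dots> = ennreal M / ennreal (\<epsilon> * m) + 1"
    unfolding a_def using real em assms total_pos by (simp add: divide_ennreal[symmetric])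
  finally show ?thesis
    using real by simp
qed (simp add: ennreal_top_divide)

end

lemma tail_mass_mixture_le:
  assumes v0: "\<And>y. 0 \<le> v y" and u0: "\<And>y. 0 \<le> u y" and al: "0 \<le> al" and be: "0 \<le> be"
    and mu: "(\<integral>\<^sup>+ y. ennreal (u y) \<partial>count_space UNIV) = ennreal mu"
    and wmix: "\<And>y. w y = al * v y + be * u y"
    and close: "\<And>y. 0 < v y \<Longrightarrow> y \<notin> B \<Longrightarrow> s y \<le> t y + K"
  shows "tail_mass w s (a + K)
    \<le> ennreal al * (tail_mass v t a + (\<integral>\<^sup>+ y. ennreal (v y) * indicator B y \<partial>count_space UNIV)) + ennreal be * ennreal mu"
proof -
  have "ennreal (w y) * indicator {y. a + K < s y} y \<le>
      ennreal al * (ennreal (v y) * indicator {y. a < t y} y + ennreal (v y) * indicator B y) + ennreal be * ennreal (u y)" for y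
  proof -
    have wy: "ennreal (w y) = ennreal al * ennreal (v y) + ennreal be * ennreal (u y)"
      using wmix[of y] al be v0[of y] u0[of y] by (simp add: ennreal_mult[symmetric])
    have "a < t y" if "a + K < s y" "0 < v y" "y \<notin> B"
      using close[of y] that by linarith
    then have "ennreal (v y) \<le> ennreal (v y) * indicator {y. a < t y} y + ennreal (v y) * indicator B y"
      if "a + K < s y" "v y \<noteq> 0"
      using that v0[of y] by (cases "y \<in> B") (auto split: split_indicator)
    then show ?thesis
      unfolding wy by (cases "a + K < s y \<and> v y \<noteq> 0") (auto intro: add_mono mult_left_mono split: split_indicator)
  qed
  then have "tail_mass w s (a + K) \<le> (\<integral>\<^sup>+ y. ennreal al * (ennreal (v y) * indicator {y. a < t y} y
      + ennreal (v y) * indicator B y) + ennreal be * ennreal (u y) \<partial>count_space UNIV)"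
    unfolding tail_mass_def by (intro nn_integral_mono)
  also have "\<dots> = ennreal al * (tail_mass v t a + (\<integral>\<^sup>+ y. ennreal (v y) * indicator B y \<partial>count_space UNIV))
      + ennreal be * ennreal mu"
    unfolding tail_mass_def mu[symmetric] by (simp add: nn_integral_add nn_integral_cmult)
  finally show ?thesis .
qed

lemma tail_mass_dominated_le:
  assumes v0: "\<And>y. 0 \<le> v y" and al: "0 \<le> al" and dominates: "\<And>y. al * v y \<le> w y"
    and close: "\<And>y. 0 < v y \<Longrightarrow> y \<notin> B \<Longrightarrow> t y \<le> s y + K"
  shows "ennreal al * tail_mass v t (a + K)
    \<le> tail_mass w s a + ennreal al * (\<integral>\<^sup>+ y. ennreal (v y) * indicator B y \<partial>count_space UNIV)"
proof -
  have "ennreal al * (ennreal (v y) * indicator {y. a + K < t y} y) \<le>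
      ennreal (w y) * indicator {y. a < s y} y + ennreal al * (ennreal (v y) * indicator B y)" for y
  proof (cases "a + K < t y \<and> 0 < v y \<and> y \<notin> B")
    case True
    moreover have "ennreal al * ennreal (v y) \<le> ennreal (w y)"
      using dominates[of y] al v0[of y] by (simp add: ennreal_mult[symmetric] ennreal_leI)
    ultimately show ?thesis
      using close[of y] by (simp add: add_increasing2)
  next
    case False
    then show ?thesis
      using v0[of y] by (auto simp: add_increasing split: split_indicator)
  qed
  then have "(\<integral>\<^sup>+ y. ennreal al * (ennreal (v y) * indicator {y. a + K < t y} y) \<partial>count_space UNIV)
      \<le> (\<integral>\<^sup>+ y. ennreal (w y) * indicator {y. a < s y} y + ennreal al * (ennreal (v y) * indicator B y) \<partial>count_space UNIV)"
    by (intro nn_integral_mono)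
  then show ?thesis
    unfolding tail_mass_def by (simp add: nn_integral_add nn_integral_cmult)
qed

lemma tail_quantile_mixture_le:
  assumes W: "scored_weights w s m" and V: "scored_weights v t mv"
    and u0: "\<And>y. 0 \<le> u y" and mu: "(\<integral>\<^sup>+ y. ennreal (u y) \<partial>count_space UNIV) = ennreal mu" "0 \<le> mu"
    and e: "0 < \<epsilon>" "\<epsilon> < 1" and al: "0 < al" and be: "0 \<le> be"
    and wmix: "\<And>y. w y = al * v y + be * u y" and mmix: "m = al * mv + be * mu"
    and close: "\<And>y. 0 < v y \<Longrightarrow> y \<notin> B \<Longrightarrow> s y \<le> t y + K"
    and small_mix: "be * mu \<le> \<epsilon> / 3 * m"
    and small_B: "(\<integral>\<^sup>+ y. ennreal (v y) * indicator B y \<partial>count_space UNIV) \<le> ennreal (\<epsilon> / 3 * mv)"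
  shows "tail_quantile w s m \<epsilon> \<le> tail_quantile v t mv (\<epsilon> / 3) + 1 + K"
proof -
  interpret W: scored_weights w s m by (rule W)
  interpret V: scored_weights v t mv by (rule V)
  define a where "a = tail_quantile v t mv (\<epsilon> / 3) + 1"
  have "tail_mass w s (a + K)
      \<le> ennreal al * (tail_mass v t a + (\<integral>\<^sup>+ y. ennreal (v y) * indicator B y \<partial>count_space UNIV)) + ennreal be * ennreal mu"
    using al be by (intro tail_mass_mixture_le[OF V.weight_nonneg u0 _ _ mu(1) wmix close]) auto
  also have "\<dots> \<le> ennreal al * (ennreal (\<epsilon> / 3 * mv) + ennreal (\<epsilon> / 3 * mv)) + ennreal be * ennreal mu"
    unfolding a_def using e by (intro add_mono mult_left_mono V.tail_mass_above_tail_quantile small_B) auto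
  also have "\<dots> = ennreal (2 * \<epsilon> / 3 * (al * mv) + be * mu)"
    using al be e V.total_pos mu(2) by (simp add: ennreal_mult[symmetric] ennreal_plus[symmetric] del: ennreal_plus)
  also have "\<dots> \<le> ennreal (\<epsilon> * m)"
  proof (intro ennreal_leI)
    have "2 * \<epsilon> / 3 * (al * mv) \<le> 2 * \<epsilon> / 3 * m"
      using mmix be mu(2) e by (intro mult_left_mono) auto
    then show "2 * \<epsilon> / 3 * (al * mv) + be * mu \<le> \<epsilon> * m"
      using small_mix by linarith
  qed
  finally have "tail_quantile w s m \<epsilon> \<le> a + K"
    by (rule W.tail_quantile_le[OF e(2)])
  then show ?thesis
    unfolding a_def by simp
qed

lemma tail_quantile_le_of_dominating:
  assumes W: "scored_weights w s m" and V: "scored_weights v t mv"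
    and e: "0 < \<epsilon>" "\<epsilon> < 1" and al: "0 < al"
    and dominates: "\<And>y. al * v y \<le> w y" and total_le: "m \<le> 2 * al * mv"
    and close: "\<And>y. 0 < v y \<Longrightarrow> y \<notin> B \<Longrightarrow> t y \<le> s y + K"
    and small_B: "(\<integral>\<^sup>+ y. ennreal (v y) * indicator B y \<partial>count_space UNIV) \<le> ennreal (\<epsilon> / 3 * mv)"
  shows "tail_quantile v t mv \<epsilon> \<le> tail_quantile w s m (\<epsilon> / 3) + 1 + K"
proof -
  interpret W: scored_weights w s m by (rule W)
  interpret V: scored_weights v t mv by (rule V)
  define a where "a = tail_quantile w s m (\<epsilon> / 3) + 1"
  have "ennreal al * tail_mass v t (a + K)
      \<le> tail_mass w s a + ennreal al * (\<integral>\<^sup>+ y. ennreal (v y) * indicator B y \<partial>count_space UNIV)"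
    using al by (intro tail_mass_dominated_le[OF V.weight_nonneg _ dominates close]) auto
  also have "\<dots> \<le> ennreal (\<epsilon> / 3 * m) + ennreal al * ennreal (\<epsilon> / 3 * mv)"
    unfolding a_def using e by (intro add_mono mult_left_mono W.tail_mass_above_tail_quantile small_B) auto
  also have "\<dots> \<le> ennreal al * ennreal (\<epsilon> * mv)"
  proof -
    have "\<epsilon> / 3 * m \<le> \<epsilon> / 3 * (2 * al * mv)"
      using total_le e by (intro mult_left_mono) auto
    then have "\<epsilon> / 3 * m + al * (\<epsilon> / 3 * mv) \<le> al * (\<epsilon> * mv)"
      by (simp add: algebra_simps)
    then show ?thesis
      using al e W.total_pos V.total_pos
      by (simp add: ennreal_mult[symmetric] ennreal_plus[symmetric] ennreal_leI del: ennreal_plus)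
  qed
  finally have "tail_mass v t (a + K) \<le> ennreal (\<epsilon> * mv)"
    using al by (simp add: ennreal_mult_le_mult_iff)
  then have "tail_quantile v t mv \<epsilon> \<le> a + K"
    by (rule V.tail_quantile_le[OF e(2)])
  then show ?thesis
    unfolding a_def by simp
qed

section \<open>The information spectrum of a general source\<close>

abbreviation margX :: "(nat \<Rightarrow> ('a \<times> 'b) pmf) \<Rightarrow> nat \<Rightarrow> 'a \<Rightarrow> real" where
  "margX P n x \<equiv> pmf (map_pmf fst (P n)) x"

abbreviation margY :: "(nat \<Rightarrow> ('a \<times> 'b) pmf) \<Rightarrow> nat \<Rightarrow> 'b \<Rightarrow> real" where
  "margY P n y \<equiv> pmf (map_pmf snd (P n)) y"

text \<open>The information density \<open>log (1 / P\<^sub>X\<^sub>|\<^sub>Y(x|y))\<close>, i.e. \<open>n Z\<^sub>n\<close> in the notation of \<open>unif_integrable\<close>.\<close>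

abbreviation cond_info :: "(nat \<Rightarrow> ('a list \<times> 'b list) pmf) \<Rightarrow> nat \<Rightarrow> 'a list \<Rightarrow> 'b list \<Rightarrow> real" where
  "cond_info P n x y \<equiv> log 2 (1 / condXY P n x y)"

lemma gen_source_length:
  assumes "gen_source P" "pmf (P n) (x, y) \<noteq> 0"
  shows "length x = n" "length y = n"
proof -
  have "(x, y) \<in> set_pmf (P n)"
    using assms(2) by (simp add: set_pmf_iff)
  then show "length x = n" "length y = n"
    using assms(1) unfolding gen_source_def by auto
qed

lemma gen_source_margX_pos_iff:
  assumes "gen_source P"
  shows "0 < margX P n x \<longleftrightarrow> length x = n"
proof
  assume "0 < margX P n x"
  then have "x \<in> set_pmf (map_pmf fst (P n))"
    by (simp add: set_pmf_iff del: set_map_pmf)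
  then obtain y where "(x, y) \<in> set_pmf (P n)"
    by auto
  then show "length x = n"
    using gen_source_length[OF assms] by (auto simp: set_pmf_iff)
qed (use assms in \<open>auto simp: gen_source_def\<close>)

lemma cond_info_nonneg: "0 \<le> cond_info P n x y"
proof -
  have "0 \<le> condXY P n x y" "condXY P n x y \<le> 1"
    unfolding condXY_def using pmf_le_pmf_snd[of "P n" x y] by (auto simp: divide_le_eq_1)
  then show ?thesis
    by (cases "condXY P n x y = 0") (auto simp: log_def)
qed

lemma cond_info_eq:
  assumes "0 < pmf (P n) (x, y)"
  shows "cond_info P n x y = log 2 (margY P n y) - log 2 (pmf (P n) (x, y))"
proof -
  have "0 < margY P n y"
    using assms pmf_le_pmf_snd[of "P n" x y] by linarith
  then show ?thesis
    using assms unfolding condXY_def by (simp add: log_divide)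
qed

lemma scored_weights_fiber:
  fixes P :: "nat \<Rightarrow> ('a::countable list \<times> 'b::countable list) pmf"
  assumes "0 < margX P n x"
  shows "scored_weights (\<lambda>y. pmf (P n) (x, y)) (cond_info P n x) (margX P n x)"
  using assms by unfold_locales (auto simp: cond_info_nonneg ennreal_pmf_fst_eq_nn_integral)

lemma h_up_eq_tail_quantile:
  fixes P :: "nat \<Rightarrow> ('a::countable list \<times> 'b::countable list) pmf"
  assumes m: "0 < margX P n x" and "0 \<le> \<epsilon>"
  shows "h_up P n \<epsilon> x = tail_quantile (\<lambda>y. pmf (P n) (x, y)) (cond_info P n x) (margX P n x) \<epsilon>"
proof -
  have cond: "ennreal (condYX P n x y) = ennreal (1 / margX P n x) * ennreal (pmf (P n) (x, y))" for y
    unfolding condYX_def using m by (simp add: ennreal_mult[symmetric])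
  have "(\<integral>\<^sup>+ y. ennreal (condYX P n x y) \<partial>count_space UNIV) = ennreal (1 / margX P n x) * ennreal (margX P n x)"
    by (simp add: cond nn_integral_cmult ennreal_pmf_fst_eq_nn_integral)
  then have finite: "(\<integral>\<^sup>+ y. ennreal (condYX P n x y) \<partial>count_space UNIV) < \<infinity>"
    by (simp add: ennreal_mult_less_top)
  have nonneg: "0 \<le> condYX P n x y" for y
    by (simp add: condYX_def)
  have "infsum (condYX P n x) {y. a < cond_info P n x y} \<le> \<epsilon> \<longleftrightarrow>
      tail_mass (\<lambda>y. pmf (P n) (x, y)) (cond_info P n x) a \<le> ennreal (\<epsilon> * margX P n x)" for a
  proof -
    have "ennreal (infsum (condYX P n x) {y. a < cond_info P n x y})
        = ennreal (1 / margX P n x) * tail_mass (\<lambda>y. pmf (P n) (x, y)) (cond_info P n x) a"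
      by (subst ennreal_infsum_eq_nn_integral[OF nonneg finite])
        (simp add: cond tail_mass_def nn_integral_cmult[symmetric] mult.assoc)
    moreover have "0 \<le> infsum (condYX P n x) {y. a < cond_info P n x y}"
      by (intro infsum_nonneg nonneg)
    ultimately show ?thesis
      using ennreal_mult_le_iff_le_times[OF m assms(2)] assms(2) by (metis ennreal_le_iff)
  qed
  then show ?thesis
    unfolding h_up_def tail_quantile_def by simp
qed

lemma margX_mult_h_up_le:
  fixes P :: "nat \<Rightarrow> ('a::countable list \<times> 'b::countable list) pmf"
  assumes e: "0 < \<epsilon>" "\<epsilon> < 1"
  shows "ennreal (margX P n x) * ennreal (h_up P n \<epsilon> x)
    \<le> ennreal (1 / \<epsilon>) * (\<integral>\<^sup>+ y. ennreal (pmf (P n) (x, y) * cond_info P n x y) \<partial>count_space UNIV)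
      + ennreal (margX P n x)"
proof (cases "margX P n x = 0")
  case False
  then have m: "0 < margX P n x"
    by (simp add: order_less_le)
  interpret scored_weights "\<lambda>y. pmf (P n) (x, y)" "cond_info P n x" "margX P n x"
    using m by (rule scored_weights_fiber)
  let ?I = "\<integral>\<^sup>+ y. ennreal (pmf (P n) (x, y) * cond_info P n x y) \<partial>count_space UNIV"
  have "ennreal (h_up P n \<epsilon> x) \<le> ?I / ennreal (\<epsilon> * margX P n x) + 1"
    using h_up_eq_tail_quantile[of P n x, OF m] tail_quantile_markov[OF e] e by simp
  also have "\<dots> = ennreal (1 / (\<epsilon> * margX P n x)) * ?I + 1"
    using e m by (simp add: divide_ennreal_def inverse_ennreal mult.commute inverse_eq_divide)
  finally have "ennreal (margX P n x) * ennreal (h_up P n \<epsilon> x)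
      \<le> ennreal (margX P n x) * (ennreal (1 / (\<epsilon> * margX P n x)) * ?I + 1)"
    by (rule mult_left_mono) simp
  also have "\<dots> = (ennreal (margX P n x) * ennreal (1 / (\<epsilon> * margX P n x))) * ?I + ennreal (margX P n x)"
    by (simp add: distrib_left mult.assoc)
  also have "ennreal (margX P n x) * ennreal (1 / (\<epsilon> * margX P n x)) = ennreal (1 / \<epsilon>)"
    using m e by (simp add: ennreal_mult[symmetric])
  finally show ?thesis .
qed simp

definition H_s_eps_under ::
  "(nat \<Rightarrow> ('a list \<times> 'c list) pmf) \<Rightarrow> (nat \<Rightarrow> ('a list \<times> 'b list) pmf) \<Rightarrow> nat \<Rightarrow> real \<Rightarrow> ennreal" where
  "H_s_eps_under R P n \<epsilon> = (\<integral>\<^sup>+ x. ennreal (margX R n x) * ennreal (h_up P n \<epsilon> x) \<partial>count_space UNIV)"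

lemma H_s_eps_eq_under: "H_s_eps P n \<epsilon> = H_s_eps_under P P n \<epsilon>"
  unfolding H_s_eps_def H_s_eps_under_def by (simp add: nn_integral_measure_pmf)

lemma H_s_eps_antimono:
  fixes P :: "nat \<Rightarrow> ('a::countable list \<times> 'b::countable list) pmf"
  assumes "0 < \<epsilon>" "\<epsilon> \<le> \<epsilon>'" "\<epsilon>' < 1"
  shows "H_s_eps P n \<epsilon>' \<le> H_s_eps P n \<epsilon>"
  unfolding H_s_eps_eq_under H_s_eps_under_def
proof (intro nn_integral_mono)
  fix x
  show "ennreal (margX P n x) * ennreal (h_up P n \<epsilon>' x) \<le> ennreal (margX P n x) * ennreal (h_up P n \<epsilon> x)"
  proof (cases "margX P n x = 0")
    case False
    then have m: "0 < margX P n x"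
      by (simp add: order_less_le)
    interpret scored_weights "\<lambda>y. pmf (P n) (x, y)" "cond_info P n x" "margX P n x"
      using m by (rule scored_weights_fiber)
    have "h_up P n \<epsilon>' x \<le> h_up P n \<epsilon> x"
      using tail_quantile_antimono[OF assms] assms by (simp add: h_up_eq_tail_quantile[of P n x, OF m])
    then show ?thesis
      by (intro mult_left_mono ennreal_leI) auto
  qed simp
qed

definition UI_tail :: "(nat \<Rightarrow> ('a list \<times> 'b list) pmf) \<Rightarrow> real \<Rightarrow> ennreal" where
  "UI_tail P u = (SUP n\<in>{1..}. \<integral>\<^sup>+ z. ennreal (\<bar>z\<bar> * indicator {z. \<bar>z\<bar> \<ge> u} z)
     \<partial>measure_pmf (map_pmf (Zrv P n) (P n)))"

lemma UI_tail_tendsto_0: "unif_integrable P \<Longrightarrow> (UI_tail P \<longlongrightarrow> 0) at_top"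
  unfolding unif_integrable_def UI_tail_def by simp

definition info_tail :: "(nat \<Rightarrow> ('a list \<times> 'b list) pmf) \<Rightarrow> nat \<Rightarrow> real \<Rightarrow> 'a list \<Rightarrow> 'b list \<Rightarrow> real" where
  "info_tail P n u x y = cond_info P n x y * indicator {t. real n * u \<le> t} (cond_info P n x y)"

lemma info_tail_nonneg: "0 \<le> info_tail P n u x y"
  unfolding info_tail_def using cond_info_nonneg[of P n x y] by (simp split: split_indicator)

lemma cond_info_le_info_tail: "0 \<le> u \<Longrightarrow> cond_info P n x y \<le> real n * u + info_tail P n u x y"
  unfolding info_tail_def by (auto split: split_indicator)

lemma nn_integral_info_tail_le:
  fixes P :: "nat \<Rightarrow> ('a::countable list \<times> 'b::countable list) pmf"
  assumes n: "1 \<le> n"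
  shows "(\<integral>\<^sup>+ x. \<integral>\<^sup>+ y. ennreal (pmf (P n) (x, y)) * ennreal (info_tail P n u x y) \<partial>count_space UNIV \<partial>count_space UNIV)
    \<le> ennreal (real n) * UI_tail P u"
proof -
  have "ennreal (info_tail P n u x y) = ennreal (real n) * ennreal (\<bar>z\<bar> * indicator {z. \<bar>z\<bar> \<ge> u} z)"
    if "z = Zrv P n (x, y)" for x y z
  proof -
    have z: "z = cond_info P n x y / real n" "0 \<le> z"
      unfolding that Zrv_def using cond_info_nonneg[of P n x y] by simp_all
    moreover have "real n * u \<le> cond_info P n x y \<longleftrightarrow> u \<le> z"
      using z(1) n by (simp add: pos_le_divide_eq mult.commute)
    ultimately have "info_tail P n u x y = real n * (\<bar>z\<bar> * indicator {z. \<bar>z\<bar> \<ge> u} z)"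
      unfolding info_tail_def using n cond_info_nonneg[of P n x y] by (simp split: split_indicator)
    then show ?thesis
      by (metis ennreal_mult' of_nat_0_le_iff)
  qed
  then have "(\<integral>\<^sup>+ x. \<integral>\<^sup>+ y. ennreal (pmf (P n) (x, y)) * ennreal (info_tail P n u x y) \<partial>count_space UNIV \<partial>count_space UNIV)
      = (\<integral>\<^sup>+ z. ennreal (pmf (P n) z) * (ennreal (real n) * ennreal (\<bar>Zrv P n z\<bar> * indicator {z. \<bar>z\<bar> \<ge> u} (Zrv P n z))) \<partial>count_space UNIV)"
    by (subst nn_integral_count_space_pair) simp
  also have "\<dots> = ennreal (real n) * (\<integral>\<^sup>+ z. ennreal (\<bar>z\<bar> * indicator {z. \<bar>z\<bar> \<ge> u} z) \<partial>measure_pmf (map_pmf (Zrv P n) (P n)))"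
    by (simp add: nn_integral_measure_pmf[symmetric] nn_integral_cmult mult.left_commute)
  also have "\<dots> \<le> ennreal (real n) * UI_tail P u"
    unfolding UI_tail_def using n by (intro mult_left_mono SUP_upper) auto
  finally show ?thesis .
qed

lemma nn_integral_on_cond_info_le:
  fixes P :: "nat \<Rightarrow> ('a::countable list \<times> 'b::countable list) pmf"
  assumes n: "1 \<le> n" and u: "0 \<le> u"
  shows "(\<integral>\<^sup>+ x. indicator A x * (\<integral>\<^sup>+ y. ennreal (pmf (P n) (x, y) * cond_info P n x y) \<partial>count_space UNIV) \<partial>count_space UNIV)
    \<le> ennreal (real n * u) * ennreal (measure_pmf.prob (map_pmf fst (P n)) A) + ennreal (real n) * UI_tail P u"
proof -
  let ?tail = "\<lambda>x. \<integral>\<^sup>+ y. ennreal (pmf (P n) (x, y)) * ennreal (info_tail P n u x y) \<partial>count_space UNIV"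
  have pointwise: "ennreal (pmf (P n) (x, y) * cond_info P n x y)
      \<le> ennreal (real n * u) * ennreal (pmf (P n) (x, y)) + ennreal (pmf (P n) (x, y)) * ennreal (info_tail P n u x y)" for x y
  proof -
    have "pmf (P n) (x, y) * cond_info P n x y \<le> pmf (P n) (x, y) * (real n * u + info_tail P n u x y)"
      by (intro mult_left_mono cond_info_le_info_tail u) simp
    then have "ennreal (pmf (P n) (x, y) * cond_info P n x y)
        \<le> ennreal (real n * u * pmf (P n) (x, y) + pmf (P n) (x, y) * info_tail P n u x y)"
      by (intro ennreal_leI) (simp add: algebra_simps)
    also have "\<dots> = ennreal (real n * u) * ennreal (pmf (P n) (x, y)) + ennreal (pmf (P n) (x, y)) * ennreal (info_tail P n u x y)"
      using u info_tail_nonneg[of P n u x y] by (simp add: ennreal_mult)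
    finally show ?thesis .
  qed
  have fiber: "(\<integral>\<^sup>+ y. ennreal (pmf (P n) (x, y) * cond_info P n x y) \<partial>count_space UNIV)
      \<le> ennreal (real n * u) * ennreal (margX P n x) + ?tail x" for x
  proof -
    have "(\<integral>\<^sup>+ y. ennreal (pmf (P n) (x, y) * cond_info P n x y) \<partial>count_space UNIV)
        \<le> (\<integral>\<^sup>+ y. ennreal (real n * u) * ennreal (pmf (P n) (x, y))
            + ennreal (pmf (P n) (x, y)) * ennreal (info_tail P n u x y) \<partial>count_space UNIV)"
      by (intro nn_integral_mono pointwise)
    also have "\<dots> = ennreal (real n * u) * ennreal (margX P n x) + ?tail x"
      by (simp add: nn_integral_add nn_integral_cmult ennreal_pmf_fst_eq_nn_integral)
    finally show ?thesis .
  qed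
  have "(\<integral>\<^sup>+ x. indicator A x * (\<integral>\<^sup>+ y. ennreal (pmf (P n) (x, y) * cond_info P n x y) \<partial>count_space UNIV) \<partial>count_space UNIV)
      \<le> (\<integral>\<^sup>+ x. ennreal (real n * u) * (ennreal (margX P n x) * indicator A x) + ?tail x \<partial>count_space UNIV)"
    using fiber by (intro nn_integral_mono) (auto split: split_indicator)
  also have "\<dots> \<le> ennreal (real n * u) * ennreal (measure_pmf.prob (map_pmf fst (P n)) A) + (\<integral>\<^sup>+ x. ?tail x \<partial>count_space UNIV)"
    by (simp add: nn_integral_add nn_integral_cmult nn_integral_pmf_indicator nn_integral_mono
        split: split_indicator)
  also have "\<dots> \<le> ennreal (real n * u) * ennreal (measure_pmf.prob (map_pmf fst (P n)) A) + ennreal (real n) * UI_tail P u"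
    by (intro add_left_mono nn_integral_info_tail_le n)
  finally show ?thesis .
qed

lemma nn_integral_on_margX_mult_h_up_le:
  fixes P :: "nat \<Rightarrow> ('a::countable list \<times> 'b::countable list) pmf" and A :: "'a list set"
  assumes e: "0 < \<epsilon>" "\<epsilon> < 1" and n: "1 \<le> n" and u: "0 \<le> u"
  defines "p \<equiv> measure_pmf.prob (map_pmf fst (P n)) A"
  shows "(\<integral>\<^sup>+ x. ennreal (margX P n x) * indicator A x * ennreal (h_up P n \<epsilon> x) \<partial>count_space UNIV)
    \<le> ennreal p + ennreal (1 / \<epsilon>) * (ennreal (real n * u) * ennreal p + ennreal (real n) * UI_tail P u)"
proof -
  have "(\<integral>\<^sup>+ x. ennreal (margX P n x) * indicator A x * ennreal (h_up P n \<epsilon> x) \<partial>count_space UNIV)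
      \<le> (\<integral>\<^sup>+ x. ennreal (margX P n x) * indicator A x + ennreal (1 / \<epsilon>) * (indicator A x *
          (\<integral>\<^sup>+ y. ennreal (pmf (P n) (x, y) * cond_info P n x y) \<partial>count_space UNIV)) \<partial>count_space UNIV)"
    using margX_mult_h_up_le[OF e, of P n]
    by (intro nn_integral_mono) (auto simp: add.commute split: split_indicator)
  also have "\<dots> \<le> ennreal p + ennreal (1 / \<epsilon>) * (ennreal (real n * u) * ennreal p + ennreal (real n) * UI_tail P u)"
    unfolding p_def using nn_integral_on_cond_info_le[OF n u, of A P]
    by (simp add: nn_integral_add nn_integral_cmult nn_integral_pmf_indicator mult_left_mono)
  finally show ?thesis .
qed

lemma ex_UI_tail_le:
  assumes "unif_integrable P" "unif_integrable Q" "0 < d"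
  shows "\<exists>u\<ge>0. UI_tail P u \<le> ennreal d \<and> UI_tail Q u \<le> ennreal d"
proof -
  have "\<forall>\<^sub>F u in at_top. UI_tail P u < ennreal d" "\<forall>\<^sub>F u in at_top. UI_tail Q u < ennreal d"
    using order_tendstoD(2)[OF UI_tail_tendsto_0[OF assms(1)]] order_tendstoD(2)[OF UI_tail_tendsto_0[OF assms(2)]]
      assms(3) by auto
  then have "\<forall>\<^sub>F u in at_top. UI_tail P u < ennreal d \<and> UI_tail Q u < ennreal d \<and> (0::real) \<le> u"
    using eventually_ge_at_top[of "0::real"] by eventually_elim auto
  then show ?thesis
    by (metis (no_types, lifting) eventually_happens' less_imp_le trivial_limit_at_top_linorder)
qed

definition low_ratio_set :: "(nat \<Rightarrow> ('a \<times> 'b) pmf) \<Rightarrow> (nat \<Rightarrow> ('a \<times> 'c) pmf) \<Rightarrow> nat \<Rightarrow> real \<Rightarrow> 'a set" where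
  "low_ratio_set P Q n \<gamma> = {x. (1 / real n) * log 2 (margX P n x / margX Q n x) < \<gamma>}"

lemma ex_prob_low_ratio_set_tendsto_0:
  assumes "spec_inf_div P Q > 0"
  shows "\<exists>\<gamma>>0. (\<lambda>n. measure_pmf.prob (map_pmf fst (P n)) (low_ratio_set P Q n \<gamma>)) \<longlonglongrightarrow> 0"
proof -
  obtain \<beta> where "0 < ereal \<beta>"
    and "(\<lambda>n. measure_pmf.prob (map_pmf fst (P n))
        {x. (1 / real n) * log 2 (margX P n x / margX Q n x) < \<beta>}) \<longlonglongrightarrow> 0"
    using assms unfolding spec_inf_div_def by (auto simp: less_Sup_iff)
  then show ?thesis
    unfolding low_ratio_set_def by (intro exI[of _ \<beta>]) auto
qed

lemma margX_le_outside_low_ratio_set: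
  assumes "0 < margX P n x" "0 < margX Q n x" "1 \<le> n" "x \<notin> low_ratio_set P Q n \<gamma>"
  shows "margX Q n x \<le> 2 powr (- (real n * \<gamma>)) * margX P n x"
proof -
  have "real n * \<gamma> \<le> log 2 (margX P n x / margX Q n x)"
    using assms(3,4) unfolding low_ratio_set_def by (simp add: field_simps)
  then have "2 powr (real n * \<gamma>) \<le> margX P n x / margX Q n x"
    using assms(1,2) by (subst (asm) le_log_iff) auto
  then show ?thesis
    using assms(2) by (simp add: powr_minus field_simps)
qed

section \<open>Mixtures of two sources\<close>

definition margY_excess :: "(nat \<Rightarrow> ('a \<times> 'b) pmf) \<Rightarrow> (nat \<Rightarrow> ('a \<times> 'b) pmf) \<Rightarrow> nat \<Rightarrow> 'b \<Rightarrow> real" where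
  "margY_excess P Q n y = max 0 (log 2 (margY P n y) - log 2 (margY Q n y))"

lemma nn_integral_margY_excess_le:
  fixes P Q :: "nat \<Rightarrow> ('a::countable \<times> 'b::countable) pmf"
  assumes supp: "\<And>y. 0 < margY Q n y \<Longrightarrow> 0 < margY P n y"
  shows "(\<integral>\<^sup>+ x. \<integral>\<^sup>+ y. ennreal (pmf (Q n) (x, y)) * ennreal (margY_excess P Q n y)
    \<partial>count_space UNIV \<partial>count_space UNIV) \<le> 2"
proof -
  have "margY Q n y * margY_excess P Q n y \<le> 2 * margY P n y" for y
  proof (cases "0 < margY Q n y \<and> log 2 (margY Q n y) < log 2 (margY P n y)")
    case True
    moreover have "0 < margY P n y"
      using True supp by blast
    ultimately have "margY_excess P Q n y = log 2 (margY P n y / margY Q n y)"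
      unfolding margY_excess_def by (simp add: log_divide)
    also have "\<dots> \<le> 2 * (margY P n y / margY Q n y)"
      using True supp by (intro log2_le_twice) simp
    finally show ?thesis
      using True by (simp add: field_simps)
  next
    case False
    then have "margY Q n y * margY_excess P Q n y = 0"
      unfolding margY_excess_def using pmf_nonneg[of "map_pmf snd (Q n)" y] by auto
    then show ?thesis
      using pmf_nonneg[of "map_pmf snd (P n)" y] by linarith
  qed
  then have "ennreal (margY Q n y) * ennreal (margY_excess P Q n y) \<le> 2 * ennreal (margY P n y)" for y
    by (metis ennreal_leI ennreal_mult'' ennreal_numeral margY_excess_def max.cobounded1 ennreal_mult' zero_le_numeral)
  then have "(\<integral>\<^sup>+ y. ennreal (margY Q n y) * ennreal (margY_excess P Q n y) \<partial>count_space UNIV)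
      \<le> (\<integral>\<^sup>+ y. 2 * ennreal (margY P n y) \<partial>count_space UNIV)"
    by (intro nn_integral_mono)
  then show ?thesis
    by (simp add: nn_integral_pmf_times_snd nn_integral_cmult nn_integral_pmf_UNIV)
qed

definition fiber_excess ::
  "(nat \<Rightarrow> ('a list \<times> 'b list) pmf) \<Rightarrow> (nat \<Rightarrow> ('a list \<times> 'b list) pmf) \<Rightarrow> nat \<Rightarrow> real \<Rightarrow> 'a list \<Rightarrow> ennreal" where
  "fiber_excess P Q n u x =
     (\<integral>\<^sup>+ y. ennreal (pmf (Q n) (x, y)) * ennreal (info_tail Q n u x y + margY_excess P Q n y) \<partial>count_space UNIV)"

lemma nn_integral_fiber_excess_le:
  fixes P Q :: "nat \<Rightarrow> ('a::countable list \<times> 'b::countable list) pmf"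
  assumes "1 \<le> n" and "\<And>y. 0 < margY Q n y \<Longrightarrow> 0 < margY P n y"
  shows "(\<integral>\<^sup>+ x. fiber_excess P Q n u x \<partial>count_space UNIV) \<le> ennreal (real n) * UI_tail Q u + 2"
proof -
  have "(\<integral>\<^sup>+ x. fiber_excess P Q n u x \<partial>count_space UNIV)
      = (\<integral>\<^sup>+ x. \<integral>\<^sup>+ y. ennreal (pmf (Q n) (x, y)) * ennreal (info_tail Q n u x y) \<partial>count_space UNIV \<partial>count_space UNIV)
      + (\<integral>\<^sup>+ x. \<integral>\<^sup>+ y. ennreal (pmf (Q n) (x, y)) * ennreal (margY_excess P Q n y) \<partial>count_space UNIV \<partial>count_space UNIV)"
    unfolding fiber_excess_def using info_tail_nonneg[of Q n u]
    by (simp add: margY_excess_def distrib_left nn_integral_add)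
  also have "\<dots> \<le> ennreal (real n) * UI_tail Q u + 2"
    by (intro add_mono nn_integral_info_tail_le nn_integral_margY_excess_le assms)
  finally show ?thesis .
qed

lemma cond_info_le_component:
  assumes a: "0 < a" and dom: "a * pmf (Q n) (x, y) \<le> pmf (P n) (x, y)" and pos: "0 < pmf (Q n) (x, y)"
    and u: "0 \<le> u"
  shows "cond_info P n x y \<le> real n * u + log 2 (1 / a) + (info_tail Q n u x y + margY_excess P Q n y)"
proof -
  have pos_mix: "0 < pmf (P n) (x, y)"
    using a pos dom by (smt (verit) mult_pos_pos)
  have "log 2 (a * pmf (Q n) (x, y)) \<le> log 2 (pmf (P n) (x, y))"
    using a pos dom by (intro log_mono) auto
  moreover have "log 2 (margY P n y) - log 2 (margY Q n y) \<le> margY_excess P Q n y"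
    unfolding margY_excess_def by simp
  ultimately have "cond_info P n x y \<le> cond_info Q n x y + margY_excess P Q n y + log 2 (1 / a)"
    using cond_info_eq[of P n x y, OF pos_mix] cond_info_eq[of Q n x y, OF pos] a pos
    by (simp add: log_mult log_divide)
  then show ?thesis
    using cond_info_le_info_tail[OF u, of Q n x y] by linarith
qed

lemma nn_integral_component_cond_info_le:
  fixes P Q :: "nat \<Rightarrow> ('a::countable list \<times> 'b::countable list) pmf"
  assumes a: "0 < a" "a \<le> 1" and dom: "\<And>y. a * pmf (Q n) (x, y) \<le> pmf (P n) (x, y)" and u: "0 \<le> u"
  shows "(\<integral>\<^sup>+ y. ennreal (pmf (Q n) (x, y) * cond_info P n x y) \<partial>count_space UNIV)
    \<le> ennreal (margX Q n x) * ennreal (real n * u + log 2 (1 / a)) + fiber_excess P Q n u x"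
proof -
  have const: "0 \<le> real n * u + log 2 (1 / a)"
    using a u by simp
  have "ennreal (pmf (Q n) (x, y) * cond_info P n x y)
      \<le> ennreal (pmf (Q n) (x, y)) * ennreal (real n * u + log 2 (1 / a))
        + ennreal (pmf (Q n) (x, y)) * ennreal (info_tail Q n u x y + margY_excess P Q n y)" for y
  proof (cases "pmf (Q n) (x, y) = 0")
    case False
    then have "pmf (Q n) (x, y) * cond_info P n x y \<le> pmf (Q n) (x, y) * (real n * u + log 2 (1 / a))
        + pmf (Q n) (x, y) * (info_tail Q n u x y + margY_excess P Q n y)"
      using cond_info_le_component[of a Q n x y P u] a dom u by (simp add: distrib_left[symmetric] mult_left_mono)
    then show ?thesis
      using const info_tail_nonneg[of Q n u x y]
      by (simp add: margY_excess_def ennreal_mult[symmetric] ennreal_plus[symmetric] ennreal_leI del: ennreal_plus)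
  qed simp
  then have "(\<integral>\<^sup>+ y. ennreal (pmf (Q n) (x, y) * cond_info P n x y) \<partial>count_space UNIV)
      \<le> (\<integral>\<^sup>+ y. ennreal (pmf (Q n) (x, y)) * ennreal (real n * u + log 2 (1 / a))
        + ennreal (pmf (Q n) (x, y)) * ennreal (info_tail Q n u x y + margY_excess P Q n y) \<partial>count_space UNIV)"
    by (intro nn_integral_mono)
  also have "\<dots> = (\<integral>\<^sup>+ y. ennreal (pmf (Q n) (x, y)) \<partial>count_space UNIV) * ennreal (real n * u + log 2 (1 / a))
      + fiber_excess P Q n u x"
    by (simp add: fiber_excess_def nn_integral_add nn_integral_multc)
  finally show ?thesis
    by (simp add: ennreal_pmf_fst_eq_nn_integral)
qed

lemma pmf_map_pmf_mixture:
  fixes p q r :: "'a::countable pmf"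
  assumes "\<And>z. pmf p z = a * pmf q z + b * pmf r z" and "0 \<le> a" and "0 \<le> b"
  shows "pmf (map_pmf f p) x = a * pmf (map_pmf f q) x + b * pmf (map_pmf f r) x"
proof -
  have "ennreal (pmf (map_pmf f p) x) = (\<integral>\<^sup>+ z. ennreal (pmf p z) * indicator (f -` {x}) z \<partial>count_space UNIV)"
    by (simp add: ennreal_pmf_map nn_integral_measure_pmf)
  also have "\<dots> = (\<integral>\<^sup>+ z. ennreal a * (ennreal (pmf q z) * indicator (f -` {x}) z)
      + ennreal b * (ennreal (pmf r z) * indicator (f -` {x}) z) \<partial>count_space UNIV)"
    using assms by (intro nn_integral_cong) (simp add: ennreal_mult distrib_right mult.assoc)
  also have "\<dots> = ennreal (a * pmf (map_pmf f q) x + b * pmf (map_pmf f r) x)"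
    using assms(2,3)
    by (simp add: nn_integral_add nn_integral_cmult ennreal_pmf_map nn_integral_measure_pmf ennreal_mult)
  finally show ?thesis
    using assms(2,3) by (subst (asm) ennreal_inj) auto
qed

locale source_mixture =
  fixes P1 P2 P :: "nat \<Rightarrow> ('a::countable list \<times> 'b::countable list) pmf" and \<alpha>1 \<alpha>2 :: real
  assumes gen_source1: "gen_source P1" and gen_source2: "gen_source P2"
    and \<alpha>1_pos: "0 < \<alpha>1" and \<alpha>2_pos: "0 < \<alpha>2" and \<alpha>_sum: "\<alpha>1 + \<alpha>2 = 1"
    and pmf_mixture: "\<And>n z. pmf (P n) z = \<alpha>1 * pmf (P1 n) z + \<alpha>2 * pmf (P2 n) z"
begin

lemma swap: "source_mixture P2 P1 P \<alpha>2 \<alpha>1"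
  using gen_source1 gen_source2 \<alpha>1_pos \<alpha>2_pos \<alpha>_sum pmf_mixture
  by unfold_locales (auto simp: add.commute)

lemma margX_mixture: "margX P n x = \<alpha>1 * margX P1 n x + \<alpha>2 * margX P2 n x"
  using \<alpha>1_pos \<alpha>2_pos by (intro pmf_map_pmf_mixture pmf_mixture) auto

lemma margY_mixture: "margY P n y = \<alpha>1 * margY P1 n y + \<alpha>2 * margY P2 n y"
  using \<alpha>1_pos \<alpha>2_pos by (intro pmf_map_pmf_mixture pmf_mixture) auto

lemma pmf_component_le: "\<alpha>1 * pmf (P1 n) z \<le> pmf (P n) z"
  using \<alpha>2_pos by (simp add: pmf_mixture)

lemma margX_component_le: "\<alpha>1 * margX P1 n x \<le> margX P n x"
  using \<alpha>2_pos by (simp add: margX_mixture)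

lemma margY_component_le: "\<alpha>1 * margY P1 n y \<le> margY P n y"
  using \<alpha>2_pos by (simp add: margY_mixture)

lemma margX_pos: "0 < margX P1 n x \<Longrightarrow> 0 < margX P n x"
  using margX_component_le[of n x] \<alpha>1_pos by (smt (verit) mult_pos_pos)

lemma cond_info_mixture_le_component:
  assumes pos: "0 < pmf (P1 n) (x, y)" and close: "margY P n y \<le> 2 powr c * margY P1 n y"
  shows "cond_info P n x y \<le> cond_info P1 n x y + (c + log 2 (1 / \<alpha>1))"
proof -
  have pos_mix: "0 < pmf (P n) (x, y)"
    using pos pmf_component_le[of n "(x, y)"] \<alpha>1_pos by (smt (verit) mult_pos_pos)
  have pos_margY: "0 < margY P1 n y"
    using pos pmf_le_pmf_snd[of "P1 n" x y] by linarith
  have "log 2 (margY P n y) \<le> log 2 (2 powr c * margY P1 n y)"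
    using close pos_mix pmf_le_pmf_snd[of "P n" x y] by (intro log_mono) auto
  moreover have "log 2 (\<alpha>1 * pmf (P1 n) (x, y)) \<le> log 2 (pmf (P n) (x, y))"
    using \<alpha>1_pos pos pmf_component_le by (intro log_mono) auto
  ultimately show ?thesis
    using cond_info_eq[of P n x y, OF pos_mix] cond_info_eq[of P1 n x y, OF pos] pos_margY pos \<alpha>1_pos
    by (simp add: log_mult log_divide)
qed

lemma cond_info_component_le_mixture:
  assumes pos: "0 < pmf (P1 n) (x, y)" and dom: "margX P n x \<le> 2 * \<alpha>1 * margX P1 n x"
    and close: "pmf (P n) (x, y) * margX P1 n x \<le> pmf (P1 n) (x, y) * margX P n x * 2 powr c"
  shows "cond_info P1 n x y \<le> cond_info P n x y + (c + 1)"
proof -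
  have pos_mix: "0 < pmf (P n) (x, y)"
    using pos pmf_component_le[of n "(x, y)"] \<alpha>1_pos by (smt (verit) mult_pos_pos)
  have pos_margY: "0 < margY P1 n y"
    using pos pmf_le_pmf_snd[of "P1 n" x y] by linarith
  have pos_margX: "0 < margX P1 n x"
    using pos pmf_le_pmf_fst[of "P1 n" x y] by linarith
  have "log 2 (\<alpha>1 * margY P1 n y) \<le> log 2 (margY P n y)"
    using \<alpha>1_pos pos_margY margY_component_le by (intro log_mono) auto
  moreover have "pmf (P n) (x, y) \<le> 2 powr (c + 1) * \<alpha>1 * pmf (P1 n) (x, y)"
  proof -
    have "pmf (P n) (x, y) * margX P1 n x \<le> pmf (P1 n) (x, y) * (2 * \<alpha>1 * margX P1 n x) * 2 powr c"
      using close dom pos by (smt (verit) mult_left_mono mult_right_mono powr_ge_zero)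
    then show ?thesis
      using pos_margX by (simp add: powr_add mult_ac)
  qed
  then have "log 2 (pmf (P n) (x, y)) \<le> log 2 (2 powr (c + 1) * \<alpha>1 * pmf (P1 n) (x, y))"
    using pos_mix by (intro log_mono) auto
  ultimately show ?thesis
    using cond_info_eq[of P n x y, OF pos_mix] cond_info_eq[of P1 n x y, OF pos] pos_margY pos \<alpha>1_pos
    by (simp add: log_mult)
qed

lemma h_up_mixture_le:
  assumes m1: "0 < margX P1 n x" and e: "0 < \<epsilon>" "\<epsilon> < 1"
    and small_mix: "\<alpha>2 * margX P2 n x \<le> \<epsilon> / 3 * margX P n x"
    and small_B: "(\<integral>\<^sup>+ y. ennreal (pmf (P1 n) (x, y)) * indicator {y. 2 powr c * margY P1 n y < margY P n y} y
      \<partial>count_space UNIV) \<le> ennreal (\<epsilon> / 3 * margX P1 n x)"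
  shows "h_up P n \<epsilon> x \<le> h_up P1 n (\<epsilon> / 3) x + 1 + (c + log 2 (1 / \<alpha>1))"
proof -
  have m: "0 < margX P n x"
    using margX_pos[OF m1] .
  have "tail_quantile (\<lambda>y. pmf (P n) (x, y)) (cond_info P n x) (margX P n x) \<epsilon>
      \<le> tail_quantile (\<lambda>y. pmf (P1 n) (x, y)) (cond_info P1 n x) (margX P1 n x) (\<epsilon> / 3) + 1 + (c + log 2 (1 / \<alpha>1))"
  proof (rule tail_quantile_mixture_le[OF scored_weights_fiber[of P, OF m] scored_weights_fiber[of P1, OF m1] _ _ _ e
        \<alpha>1_pos _ pmf_mixture margX_mixture _ small_mix small_B])
    show "(\<integral>\<^sup>+ y. ennreal (pmf (P2 n) (x, y)) \<partial>count_space UNIV) = ennreal (margX P2 n x)"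
      by (simp add: ennreal_pmf_fst_eq_nn_integral)
    show "cond_info P n x y \<le> cond_info P1 n x y + (c + log 2 (1 / \<alpha>1))"
      if "0 < pmf (P1 n) (x, y)" "y \<notin> {y. 2 powr c * margY P1 n y < margY P n y}" for y
      using that by (intro cond_info_mixture_le_component) auto
  qed (use \<alpha>2_pos in auto)
  then show ?thesis
    using e by (simp add: h_up_eq_tail_quantile[of P n x, OF m] h_up_eq_tail_quantile[of P1 n x, OF m1])
qed

lemma h_up_component_le:
  assumes m1: "0 < margX P1 n x" and e: "0 < \<epsilon>" "\<epsilon> < 1" and c: "2 powr (-c) \<le> \<epsilon> / 3"
    and dom: "margX P n x \<le> 2 * \<alpha>1 * margX P1 n x"
  shows "h_up P1 n \<epsilon> x \<le> h_up P n (\<epsilon> / 3) x + 1 + (c + 1)"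
proof -
  have m: "0 < margX P n x"
    using margX_pos[OF m1] .
  let ?B = "{y. pmf (P1 n) (x, y) * margX P n x * 2 powr c < pmf (P n) (x, y) * margX P1 n x}"
  have "(\<integral>\<^sup>+ y. ennreal (pmf (P1 n) (x, y)) * indicator ?B y \<partial>count_space UNIV) \<le> ennreal (2 powr (-c) * margX P1 n x)"
    using m by (intro nn_integral_ratio_exceeds_le) (auto simp: ennreal_pmf_fst_eq_nn_integral)
  also have "\<dots> \<le> ennreal (\<epsilon> / 3 * margX P1 n x)"
    using c m1 by (intro ennreal_leI mult_right_mono) auto
  finally have small_B: "(\<integral>\<^sup>+ y. ennreal (pmf (P1 n) (x, y)) * indicator ?B y \<partial>count_space UNIV) \<le> ennreal (\<epsilon> / 3 * margX P1 n x)" .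
  have "tail_quantile (\<lambda>y. pmf (P1 n) (x, y)) (cond_info P1 n x) (margX P1 n x) \<epsilon>
      \<le> tail_quantile (\<lambda>y. pmf (P n) (x, y)) (cond_info P n x) (margX P n x) (\<epsilon> / 3) + 1 + (c + 1)"
  proof (rule tail_quantile_le_of_dominating[OF scored_weights_fiber[of P, OF m] scored_weights_fiber[of P1, OF m1] e
        \<alpha>1_pos pmf_component_le dom _ small_B])
    show "cond_info P1 n x y \<le> cond_info P n x y + (c + 1)" if "0 < pmf (P1 n) (x, y)" "y \<notin> ?B" for y
      using that dom by (intro cond_info_component_le_mixture) auto
  qed
  then show ?thesis
    using e by (simp add: h_up_eq_tail_quantile[of P n x, OF m] h_up_eq_tail_quantile[of P1 n x, OF m1])
qed

lemma scaled_nn_integral_cond_info_mixture_le: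
  assumes u: "0 \<le> u" and \<rho>: "0 \<le> \<rho>" "\<alpha>1 * \<rho> \<le> 1" "\<alpha>2 * \<rho> * margX P2 n x \<le> margX P1 n x"
  shows "ennreal \<rho> * (\<integral>\<^sup>+ y. ennreal (pmf (P n) (x, y) * cond_info P n x y) \<partial>count_space UNIV)
    \<le> ennreal (margX P1 n x) * ennreal (2 * (real n * u) + log 2 (1 / \<alpha>1) + log 2 (1 / \<alpha>2))
      + fiber_excess P P1 n u x + ennreal (\<alpha>2 / \<alpha>1) * fiber_excess P P2 n u x"
proof -
  interpret swapped: source_mixture P2 P1 P \<alpha>2 \<alpha>1
    by (rule swap)
  let ?I = "\<lambda>Q. \<integral>\<^sup>+ y. ennreal (pmf (Q n) (x, y) * cond_info P n x y) \<partial>count_space UNIV"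
  let ?L1 = "real n * u + log 2 (1 / \<alpha>1)" and ?L2 = "real n * u + log 2 (1 / \<alpha>2)"
  have \<alpha>_le_1: "\<alpha>1 \<le> 1" "\<alpha>2 \<le> 1"
    using \<alpha>1_pos \<alpha>2_pos \<alpha>_sum by auto
  have I1: "?I P1 \<le> ennreal (margX P1 n x) * ennreal ?L1 + fiber_excess P P1 n u x"
    using \<alpha>1_pos \<alpha>_le_1 u by (intro nn_integral_component_cond_info_le pmf_component_le)
  have I2: "?I P2 \<le> ennreal (margX P2 n x) * ennreal ?L2 + fiber_excess P P2 n u x"
    using \<alpha>2_pos \<alpha>_le_1 u by (intro nn_integral_component_cond_info_le swapped.pmf_component_le)
  have "ennreal \<rho> * ?I P = ennreal (\<alpha>1 * \<rho>) * ?I P1 + ennreal (\<alpha>2 * \<rho>) * ?I P2"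
    using \<rho>(1) \<alpha>1_pos \<alpha>2_pos cond_info_nonneg[of P n x]
    by (simp add: nn_integral_cmult[symmetric] nn_integral_add[symmetric] ennreal_mult[symmetric]
        pmf_mixture algebra_simps)
  also have "\<dots> \<le> 1 * (ennreal (margX P1 n x) * ennreal ?L1 + fiber_excess P P1 n u x)
      + ennreal (\<alpha>2 * \<rho>) * (ennreal (margX P2 n x) * ennreal ?L2 + fiber_excess P P2 n u x)"
    using \<rho>(2) by (intro add_mono mult_mono I1 I2) auto
  also have "\<dots> \<le> ennreal (margX P1 n x) * ennreal ?L1 + fiber_excess P P1 n u x
      + (ennreal (margX P1 n x) * ennreal ?L2 + ennreal (\<alpha>2 / \<alpha>1) * fiber_excess P P2 n u x)"
  proof -
    have "ennreal (\<alpha>2 * \<rho>) * ennreal (margX P2 n x) \<le> ennreal (margX P1 n x)"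
      using \<rho>(1,3) \<alpha>2_pos by (simp add: ennreal_mult[symmetric] ennreal_leI)
    moreover have "ennreal (\<alpha>2 * \<rho>) \<le> ennreal (\<alpha>2 / \<alpha>1)"
      using \<rho>(2) \<alpha>1_pos \<alpha>2_pos by (intro ennreal_leI) (simp add: field_simps)
    ultimately show ?thesis
      by (simp add: distrib_left add_mono mult_right_mono mult.assoc[symmetric])
  qed
  also have "\<dots> = ennreal (margX P1 n x) * ennreal (2 * (real n * u) + log 2 (1 / \<alpha>1) + log 2 (1 / \<alpha>2))
      + fiber_excess P P1 n u x + ennreal (\<alpha>2 / \<alpha>1) * fiber_excess P P2 n u x"
    using u \<alpha>_le_1 \<alpha>1_pos \<alpha>2_pos
    by (simp add: distrib_left[symmetric] ennreal_plus[symmetric] algebra_simps del: ennreal_plus)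
  finally show ?thesis .
qed

text \<open>
  Markov's inequality for the mixture, rescaled by \<open>\<rho> = P\<^sub>1\<^sub>X(x) / P\<^sub>X(x)\<close>; the contribution
  of the second component is absorbed using \<open>\<alpha>\<^sub>2 \<rho> P\<^sub>2\<^sub>X(x) \<le> P\<^sub>1\<^sub>X(x)\<close>.
\<close>

lemma margX_mult_h_up_mixture_le:
  assumes u: "0 \<le> u" and e: "0 < \<epsilon>" "\<epsilon> < 1"
  shows "ennreal (margX P1 n x) * ennreal (h_up P n \<epsilon> x) \<le> ennreal (margX P1 n x) + ennreal (1 / \<epsilon>) *
     (ennreal (margX P1 n x) * ennreal (2 * (real n * u) + log 2 (1 / \<alpha>1) + log 2 (1 / \<alpha>2))
      + fiber_excess P P1 n u x + ennreal (\<alpha>2 / \<alpha>1) * fiber_excess P P2 n u x)"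
proof (cases "margX P n x = 0")
  case True
  then have "margX P1 n x = 0"
    using margX_pos[of n x] by (metis order_less_le pmf_nonneg)
  then show ?thesis
    by simp
next
  case False
  then have m: "0 < margX P n x"
    by (simp add: order_less_le)
  define \<rho> where "\<rho> = margX P1 n x / margX P n x"
  have \<rho>: "0 \<le> \<rho>" "\<alpha>1 * \<rho> \<le> 1" "\<alpha>2 * \<rho> * margX P2 n x \<le> margX P1 n x"
    unfolding \<rho>_def using m \<alpha>1_pos \<alpha>2_pos margX_component_le[of n x]
    by (auto simp: field_simps margX_mixture)
  let ?I = "\<integral>\<^sup>+ y. ennreal (pmf (P n) (x, y) * cond_info P n x y) \<partial>count_space UNIV"
  have margX1: "ennreal (margX P1 n x) = ennreal \<rho> * ennreal (margX P n x)"
    unfolding \<rho>_def using m by (simp add: ennreal_mult[symmetric])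
  have "ennreal (margX P1 n x) * ennreal (h_up P n \<epsilon> x) = ennreal \<rho> * (ennreal (margX P n x) * ennreal (h_up P n \<epsilon> x))"
    unfolding margX1 by (simp add: mult.assoc)
  also have "\<dots> \<le> ennreal \<rho> * (ennreal (1 / \<epsilon>) * ?I + ennreal (margX P n x))"
    by (intro mult_left_mono margX_mult_h_up_le e) simp
  also have "\<dots> = ennreal (margX P1 n x) + ennreal (1 / \<epsilon>) * (ennreal \<rho> * ?I)"
    unfolding margX1 by (simp add: distrib_left mult_ac)
  finally show ?thesis
    using scaled_nn_integral_cond_info_mixture_le[OF u \<rho>]
    by (meson add_left_mono mult_left_mono order_trans zero_le)
qed

lemma nn_integral_on_margX_mult_h_up_mixture_le:
  fixes A :: "'a list set"
  assumes n: "1 \<le> n" and u: "0 \<le> u" and e: "0 < \<epsilon>" "\<epsilon> < 1"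
  defines "p \<equiv> measure_pmf.prob (map_pmf fst (P1 n)) A"
  shows "(\<integral>\<^sup>+ x. ennreal (margX P1 n x) * indicator A x * ennreal (h_up P n \<epsilon> x) \<partial>count_space UNIV)
    \<le> ennreal p + ennreal (1 / \<epsilon>) * (ennreal (2 * (real n * u) + log 2 (1 / \<alpha>1) + log 2 (1 / \<alpha>2)) * ennreal p
      + (ennreal (real n) * UI_tail P1 u + 2) + ennreal (\<alpha>2 / \<alpha>1) * (ennreal (real n) * UI_tail P2 u + 2))"
proof -
  let ?C = "ennreal (2 * (real n * u) + log 2 (1 / \<alpha>1) + log 2 (1 / \<alpha>2))"
  have "(\<integral>\<^sup>+ x. ennreal (margX P1 n x) * indicator A x * ennreal (h_up P n \<epsilon> x) \<partial>count_space UNIV)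
      \<le> (\<integral>\<^sup>+ x. ennreal (margX P1 n x) * indicator A x + ennreal (1 / \<epsilon>) * (?C * (ennreal (margX P1 n x) * indicator A x)
          + fiber_excess P P1 n u x + ennreal (\<alpha>2 / \<alpha>1) * fiber_excess P P2 n u x) \<partial>count_space UNIV)"
    using margX_mult_h_up_mixture_le[OF u e, of n]
    by (intro nn_integral_mono) (auto simp: mult.commute split: split_indicator)
  also have "\<dots> = ennreal p + ennreal (1 / \<epsilon>) * (?C * ennreal p
      + (\<integral>\<^sup>+ x. fiber_excess P P1 n u x \<partial>count_space UNIV)
      + ennreal (\<alpha>2 / \<alpha>1) * (\<integral>\<^sup>+ x. fiber_excess P P2 n u x \<partial>count_space UNIV))"
    unfolding p_def by (simp add: nn_integral_add nn_integral_cmult nn_integral_pmf_indicator)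
  also have "\<dots> \<le> ennreal p + ennreal (1 / \<epsilon>) * (?C * ennreal p
      + (ennreal (real n) * UI_tail P1 u + 2) + ennreal (\<alpha>2 / \<alpha>1) * (ennreal (real n) * UI_tail P2 u + 2))"
    using \<alpha>1_pos \<alpha>2_pos
    by (intro add_left_mono mult_left_mono add_mono nn_integral_fiber_excess_le n)
      (auto simp: margY_mixture intro: add_pos_nonneg add_nonneg_pos)
  finally show ?thesis .
qed

lemma margX2_pos: "0 < margX P1 n x \<Longrightarrow> 0 < margX P2 n x"
  using gen_source_margX_pos_iff[OF gen_source1] gen_source_margX_pos_iff[OF gen_source2] by blast

lemma nn_integral_margY_ratio_exceeds_le:
  "(\<integral>\<^sup>+ x. \<integral>\<^sup>+ y. ennreal (pmf (P1 n) (x, y)) * indicator {y. 2 powr c * margY P1 n y < margY P n y} y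
    \<partial>count_space UNIV \<partial>count_space UNIV) \<le> ennreal (2 powr (-c))"
proof -
  have "(\<integral>\<^sup>+ y. ennreal (margY P1 n y) * indicator {y. margY P1 n y * 1 * 2 powr c < margY P n y * 1} y
      \<partial>count_space UNIV) \<le> ennreal (2 powr (-c) * 1)"
    by (intro nn_integral_ratio_exceeds_le) (auto simp: ennreal_pmf_snd_eq_nn_integral[symmetric]
        nn_integral_pmf_UNIV)
  then show ?thesis
    by (simp add: nn_integral_pmf_times_snd mult.commute)
qed

definition upper_good_set :: "nat \<Rightarrow> real \<Rightarrow> real \<Rightarrow> 'a list set" where
  "upper_good_set n \<epsilon> c = {x. 0 < margX P1 n x \<and> \<alpha>2 * margX P2 n x \<le> \<epsilon> / 3 * margX P n x \<and>
     (\<integral>\<^sup>+ y. ennreal (pmf (P1 n) (x, y)) * indicator {y. 2 powr c * margY P1 n y < margY P n y} y \<partial>count_space UNIV)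
       \<le> ennreal (\<epsilon> / 3 * margX P1 n x)}"

lemma component2_le_outside_low_ratio_set:
  assumes n: "1 \<le> n" and m1: "0 < margX P1 n x" and high: "x \<notin> low_ratio_set P1 P2 n \<gamma>"
    and small: "\<alpha>2 * 2 powr (- (real n * \<gamma>)) \<le> \<kappa> * \<alpha>1"
  shows "\<alpha>2 * margX P2 n x \<le> \<kappa> * (\<alpha>1 * margX P1 n x)"
proof -
  have "\<alpha>2 * margX P2 n x \<le> \<alpha>2 * 2 powr (- (real n * \<gamma>)) * margX P1 n x"
    using margX_le_outside_low_ratio_set[OF m1 margX2_pos[OF m1] n high] \<alpha>2_pos by simp
  also have "\<dots> \<le> \<kappa> * (\<alpha>1 * margX P1 n x)"
    using mult_right_mono[OF small, of "margX P1 n x"] by simp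
  finally show ?thesis .
qed

lemma margX_outside_upper_good_set_le:
  fixes x :: "'a list" and c :: real
  assumes n: "1 \<le> n" and e: "0 < \<epsilon>" and small: "\<alpha>2 * 2 powr (- (real n * \<gamma>)) \<le> \<epsilon> / 3 * \<alpha>1"
  defines "B \<equiv> \<integral>\<^sup>+ y. ennreal (pmf (P1 n) (x, y)) * indicator {y. 2 powr c * margY P1 n y < margY P n y} y
    \<partial>count_space UNIV"
  shows "ennreal (margX P1 n x) * indicator (- upper_good_set n \<epsilon> c) x
    \<le> ennreal (margX P1 n x) * indicator (low_ratio_set P1 P2 n \<gamma>) x + ennreal (3 / \<epsilon>) * B"
proof (cases "x \<in> upper_good_set n \<epsilon> c \<or> margX P1 n x = 0")
  case True
  then show ?thesis
    by (elim disjE) simp_all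
next
  case False
  then have m1: "0 < margX P1 n x"
    by (simp add: order_less_le)
  show ?thesis
  proof (cases "x \<in> low_ratio_set P1 P2 n \<gamma>")
    case True
    have "ennreal (margX P1 n x) * indicator (- upper_good_set n \<epsilon> c) x \<le> ennreal (margX P1 n x)"
      by (simp split: split_indicator)
    with True show ?thesis
      by (simp add: add_increasing2)
  next
    case high: False
    have "\<epsilon> / 3 * (\<alpha>1 * margX P1 n x) \<le> \<epsilon> / 3 * margX P n x"
      using e margX_component_le by (intro mult_left_mono) auto
    then have "\<alpha>2 * margX P2 n x \<le> \<epsilon> / 3 * margX P n x"
      using component2_le_outside_low_ratio_set[OF n m1 high small] by linarith
    then have "ennreal (\<epsilon> / 3 * margX P1 n x) < B"
      using False m1 unfolding upper_good_set_def B_def by auto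
    then have "ennreal (3 / \<epsilon>) * ennreal (\<epsilon> / 3 * margX P1 n x) \<le> ennreal (3 / \<epsilon>) * B"
      by (intro mult_left_mono) auto
    then show ?thesis
      using False e high by (simp add: ennreal_mult[symmetric])
  qed
qed

lemma prob_outside_upper_good_set_le:
  assumes n: "1 \<le> n" and e: "0 < \<epsilon>" and small: "\<alpha>2 * 2 powr (- (real n * \<gamma>)) \<le> \<epsilon> / 3 * \<alpha>1"
  shows "measure_pmf.prob (map_pmf fst (P1 n)) (- upper_good_set n \<epsilon> c)
    \<le> measure_pmf.prob (map_pmf fst (P1 n)) (low_ratio_set P1 P2 n \<gamma>) + 3 / \<epsilon> * 2 powr (-c)"
proof -
  let ?B = "\<lambda>x. \<integral>\<^sup>+ y. ennreal (pmf (P1 n) (x, y)) * indicator {y. 2 powr c * margY P1 n y < margY P n y} y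
    \<partial>count_space UNIV"
  have "ennreal (margX P1 n x) * indicator (- upper_good_set n \<epsilon> c) x
      \<le> ennreal (margX P1 n x) * indicator (low_ratio_set P1 P2 n \<gamma>) x + ennreal (3 / \<epsilon>) * ?B x" for x
    using margX_outside_upper_good_set_le[OF n e small] .
  then have "(\<integral>\<^sup>+ x. ennreal (margX P1 n x) * indicator (- upper_good_set n \<epsilon> c) x \<partial>count_space UNIV)
      \<le> (\<integral>\<^sup>+ x. ennreal (margX P1 n x) * indicator (low_ratio_set P1 P2 n \<gamma>) x + ennreal (3 / \<epsilon>) * ?B x
          \<partial>count_space UNIV)"
    by (intro nn_integral_mono)
  also have "\<dots> = ennreal (measure_pmf.prob (map_pmf fst (P1 n)) (low_ratio_set P1 P2 n \<gamma>))
      + ennreal (3 / \<epsilon>) * (\<integral>\<^sup>+ x. ?B x \<partial>count_space UNIV)"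
    by (simp add: nn_integral_add nn_integral_cmult nn_integral_pmf_indicator)
  also have "\<dots> \<le> ennreal (measure_pmf.prob (map_pmf fst (P1 n)) (low_ratio_set P1 P2 n \<gamma>))
      + ennreal (3 / \<epsilon>) * ennreal (2 powr (-c))"
    by (intro add_left_mono mult_left_mono nn_integral_margY_ratio_exceeds_le) simp
  finally have "ennreal (measure_pmf.prob (map_pmf fst (P1 n)) (- upper_good_set n \<epsilon> c))
      \<le> ennreal (measure_pmf.prob (map_pmf fst (P1 n)) (low_ratio_set P1 P2 n \<gamma>)) + ennreal (3 / \<epsilon>) * ennreal (2 powr (-c))"
    by (simp only: nn_integral_pmf_indicator)
  then show ?thesis
    using e by (simp add: ennreal_mult[symmetric] ennreal_plus[symmetric] del: ennreal_plus)
qed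

definition lower_good_set :: "nat \<Rightarrow> 'a list set" where
  "lower_good_set n = {x. 0 < margX P1 n x \<and> margX P n x \<le> 2 * \<alpha>1 * margX P1 n x}"

lemma prob_outside_lower_good_set_le:
  assumes n: "1 \<le> n" and small: "\<alpha>2 * 2 powr (- (real n * \<gamma>)) \<le> \<alpha>1"
  shows "measure_pmf.prob (map_pmf fst (P1 n)) (- lower_good_set n)
    \<le> measure_pmf.prob (map_pmf fst (P1 n)) (low_ratio_set P1 P2 n \<gamma>)"
proof -
  have "ennreal (margX P1 n x) * indicator (- lower_good_set n) x
      \<le> ennreal (margX P1 n x) * indicator (low_ratio_set P1 P2 n \<gamma>) x" for x
  proof (cases "x \<in> low_ratio_set P1 P2 n \<gamma> \<or> margX P1 n x = 0")
    case False
    then have m1: "0 < margX P1 n x" and high: "x \<notin> low_ratio_set P1 P2 n \<gamma>"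
      by (auto simp: order_less_le)
    have "\<alpha>2 * margX P2 n x \<le> 1 * (\<alpha>1 * margX P1 n x)"
      using component2_le_outside_low_ratio_set[OF n m1 high, of 1] small by simp
    then have "x \<in> lower_good_set n"
      unfolding lower_good_set_def using m1 by (simp add: margX_mixture)
    then show ?thesis
      by simp
  next
    case True
    then show ?thesis
      by (elim disjE) (simp_all split: split_indicator)
  qed
  then have "(\<integral>\<^sup>+ x. ennreal (margX P1 n x) * indicator (- lower_good_set n) x \<partial>count_space UNIV)
      \<le> (\<integral>\<^sup>+ x. ennreal (margX P1 n x) * indicator (low_ratio_set P1 P2 n \<gamma>) x \<partial>count_space UNIV)"
    by (intro nn_integral_mono)
  then show ?thesis
    by (simp only: nn_integral_pmf_indicator ennreal_le_iff measure_nonneg)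
qed

lemma H_s_eps_under_mixture_le:
  assumes n: "1 \<le> n" and e: "0 < \<epsilon>" "\<epsilon> < 1" and u: "0 \<le> u" and c: "0 \<le> c"
    and d: "0 \<le> d" "UI_tail P1 u \<le> ennreal d" "UI_tail P2 u \<le> ennreal d"
    and \<delta>: "measure_pmf.prob (map_pmf fst (P1 n)) (- upper_good_set n \<epsilon> c) \<le> \<delta>"
  defines "L \<equiv> log 2 (1 / \<alpha>1) + log 2 (1 / \<alpha>2)"
  shows "H_s_eps_under P1 P n \<epsilon> \<le> H_s_eps P1 n (\<epsilon> / 3) + ennreal (1 + c + log 2 (1 / \<alpha>1) + \<delta>
    + (1 / \<epsilon>) * ((2 * (real n * u) + L) * \<delta> + (1 + \<alpha>2 / \<alpha>1) * (real n * d + 2)))"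
proof -
  let ?G = "upper_good_set n \<epsilon> c" and ?p = "measure_pmf.prob (map_pmf fst (P1 n)) (- upper_good_set n \<epsilon> c)"
  have \<delta>0: "0 \<le> \<delta>"
    using \<delta> measure_nonneg order_trans by blast
  have L: "0 \<le> L" "0 \<le> log 2 (1 / \<alpha>1)"
    unfolding L_def using \<alpha>1_pos \<alpha>2_pos \<alpha>_sum by auto
  have "H_s_eps_under P1 P n \<epsilon> \<le> H_s_eps P1 n (\<epsilon> / 3) + ennreal (1 + c + log 2 (1 / \<alpha>1))
      + (\<integral>\<^sup>+ x. ennreal (margX P1 n x) * indicator (- ?G) x * ennreal (h_up P n \<epsilon> x) \<partial>count_space UNIV)"
    unfolding H_s_eps_under_def H_s_eps_eq_under
  proof (rule nn_integral_split_good_set)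
    show "h_up P n \<epsilon> x \<le> h_up P1 n (\<epsilon> / 3) x + (1 + c + log 2 (1 / \<alpha>1))" if "x \<in> ?G" for x
      using h_up_mixture_le[of n x \<epsilon> c] that e unfolding upper_good_set_def by simp
  qed (use c L in \<open>simp_all add: nn_integral_pmf_UNIV\<close>)
  also have "(\<integral>\<^sup>+ x. ennreal (margX P1 n x) * indicator (- ?G) x * ennreal (h_up P n \<epsilon> x) \<partial>count_space UNIV)
      \<le> ennreal ?p + ennreal (1 / \<epsilon>) * (ennreal (2 * (real n * u) + L) * ennreal ?p
        + (ennreal (real n) * UI_tail P1 u + 2) + ennreal (\<alpha>2 / \<alpha>1) * (ennreal (real n) * UI_tail P2 u + 2))"
    using nn_integral_on_margX_mult_h_up_mixture_le[OF n u e, of "- ?G"] unfolding L_def by (simp only: add.assoc)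
  also have "\<dots> \<le> ennreal \<delta> + ennreal (1 / \<epsilon>) * (ennreal (2 * (real n * u) + L) * ennreal \<delta>
        + (ennreal (real n) * ennreal d + 2) + ennreal (\<alpha>2 / \<alpha>1) * (ennreal (real n) * ennreal d + 2))"
    using \<delta> d by (intro add_mono mult_left_mono ennreal_leI order_refl) auto
  also have "\<dots> = ennreal (\<delta> + (1 / \<epsilon>) * ((2 * (real n * u) + L) * \<delta> + (1 + \<alpha>2 / \<alpha>1) * (real n * d + 2)))"
    using \<delta>0 d e u L \<alpha>1_pos \<alpha>2_pos
    by (simp add: ennreal_mult[symmetric] ennreal_plus[symmetric] ennreal_numeral[symmetric] algebra_simps
        del: ennreal_plus ennreal_numeral)
  finally show ?thesis
    using c L \<delta>0 d e u \<alpha>1_pos \<alpha>2_pos by (simp add: add.assoc ennreal_plus[symmetric] del: ennreal_plus)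
qed

lemma H_s_eps_le_under_mixture:
  assumes n: "1 \<le> n" and e: "0 < \<epsilon>" "\<epsilon> < 1" and u: "0 \<le> u" and c: "0 \<le> c" "2 powr (-c) \<le> \<epsilon> / 3"
    and d: "0 \<le> d" "UI_tail P1 u \<le> ennreal d"
    and \<delta>: "measure_pmf.prob (map_pmf fst (P1 n)) (- lower_good_set n) \<le> \<delta>"
  shows "H_s_eps P1 n \<epsilon> \<le> H_s_eps_under P1 P n (\<epsilon> / 3)
    + ennreal (2 + c + \<delta> + (1 / \<epsilon>) * (real n * u * \<delta> + real n * d))"
proof -
  let ?G = "lower_good_set n" and ?p = "measure_pmf.prob (map_pmf fst (P1 n)) (- lower_good_set n)"
  have \<delta>0: "0 \<le> \<delta>"
    using \<delta> measure_nonneg order_trans by blast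
  have "H_s_eps P1 n \<epsilon> \<le> H_s_eps_under P1 P n (\<epsilon> / 3) + ennreal (2 + c)
      + (\<integral>\<^sup>+ x. ennreal (margX P1 n x) * indicator (- ?G) x * ennreal (h_up P1 n \<epsilon> x) \<partial>count_space UNIV)"
    unfolding H_s_eps_under_def H_s_eps_eq_under
  proof (rule nn_integral_split_good_set)
    show "h_up P1 n \<epsilon> x \<le> h_up P n (\<epsilon> / 3) x + (2 + c)" if "x \<in> ?G" for x
      using h_up_component_le[of n x \<epsilon> c] that e c unfolding lower_good_set_def by simp
  qed (use c in \<open>simp_all add: nn_integral_pmf_UNIV\<close>)
  also have "(\<integral>\<^sup>+ x. ennreal (margX P1 n x) * indicator (- ?G) x * ennreal (h_up P1 n \<epsilon> x) \<partial>count_space UNIV)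
      \<le> ennreal ?p + ennreal (1 / \<epsilon>) * (ennreal (real n * u) * ennreal ?p + ennreal (real n) * UI_tail P1 u)"
    by (rule nn_integral_on_margX_mult_h_up_le[OF e n u])
  also have "\<dots> \<le> ennreal \<delta> + ennreal (1 / \<epsilon>) * (ennreal (real n * u) * ennreal \<delta> + ennreal (real n) * ennreal d)"
    using \<delta> d by (intro add_mono mult_left_mono ennreal_leI order_refl) auto
  also have "\<dots> = ennreal (\<delta> + (1 / \<epsilon>) * (real n * u * \<delta> + real n * d))"
    using \<delta>0 d e u by (simp add: ennreal_mult[symmetric] ennreal_plus[symmetric] del: ennreal_plus)
  finally show ?thesis
    using c \<delta>0 d e u by (simp add: add.assoc ennreal_plus[symmetric] del: ennreal_plus)
qed

lemma H_s_eps_mixture: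
  "H_s_eps P n \<epsilon> = ennreal \<alpha>1 * H_s_eps_under P1 P n \<epsilon> + ennreal \<alpha>2 * H_s_eps_under P2 P n \<epsilon>"
proof -
  have "ennreal (margX P n x) * ennreal (h_up P n \<epsilon> x) = ennreal \<alpha>1 * (ennreal (margX P1 n x) * ennreal (h_up P n \<epsilon> x))
      + ennreal \<alpha>2 * (ennreal (margX P2 n x) * ennreal (h_up P n \<epsilon> x))" for x
    using \<alpha>1_pos \<alpha>2_pos by (simp add: margX_mixture ennreal_mult distrib_right mult.assoc)
  then show ?thesis
    unfolding H_s_eps_eq_under H_s_eps_under_def by (simp add: nn_integral_add nn_integral_cmult)
qed

lemma ennreal_convex_combination_plus:
  "0 \<le> e \<Longrightarrow> ennreal \<alpha>1 * (X + ennreal e) + ennreal \<alpha>2 * (Y + ennreal e) = ennreal \<alpha>1 * X + ennreal \<alpha>2 * Y + ennreal e"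
  using \<alpha>1_pos \<alpha>2_pos \<alpha>_sum
  by (simp add: distrib_left add_ac ennreal_mult[symmetric] ennreal_plus[symmetric] distrib_right[symmetric]
      del: ennreal_plus)

end

section \<open>Mixtures of separated uniformly integrable sources\<close>

locale separated_mixture = source_mixture +
  assumes UI1: "unif_integrable P1" and UI2: "unif_integrable P2"
    and divergence12: "spec_inf_div P1 P2 > 0" and divergence21: "spec_inf_div P2 P1 > 0"
begin

lemma swap_separated: "separated_mixture P2 P1 P \<alpha>2 \<alpha>1"
  using swap UI1 UI2 divergence12 divergence21 by (simp add: separated_mixture_def separated_mixture_axioms_def)

lemma eventually_H_s_eps_under_mixture_le_of_rate:
  assumes e: "0 < \<epsilon>" "\<epsilon> < 1" and u: "0 \<le> u" and c: "0 \<le> c" "3 / \<epsilon> * 2 powr (-c) \<le> \<kappa>"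
    and d: "0 \<le> d" "UI_tail P1 u \<le> ennreal d" "UI_tail P2 u \<le> ennreal d"
    and rate: "(2 * u * \<kappa> + (1 + \<alpha>2 / \<alpha>1) * d) / \<epsilon> < \<eta>"
  shows "\<forall>\<^sub>F n in sequentially. H_s_eps_under P1 P n \<epsilon> \<le> H_s_eps P1 n (\<epsilon> / 3) + ennreal (real n * \<eta>)"
proof -
  obtain \<gamma> where \<gamma>: "0 < \<gamma>"
    and p: "(\<lambda>n. measure_pmf.prob (map_pmf fst (P1 n)) (low_ratio_set P1 P2 n \<gamma>)) \<longlonglongrightarrow> 0"
    using ex_prob_low_ratio_set_tendsto_0[OF divergence12] by blast
  define r where "r = \<alpha>2 / \<alpha>1"
  define L where "L = log 2 (1 / \<alpha>1) + log 2 (1 / \<alpha>2)"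
  define K where "K = 1 + c + log 2 (1 / \<alpha>1)"
  define C where "C = (2 * u * \<kappa> + (1 + r) * d) / \<epsilon>"
  have C: "C < \<eta>"
    using rate by (simp add: C_def r_def)
  have "\<forall>\<^sub>F n in sequentially. \<alpha>2 * 2 powr (- (real n * \<gamma>)) \<le> \<epsilon> / 3 * \<alpha>1"
    using eventually_powr_neg_le[OF \<gamma>, of "\<epsilon> * \<alpha>1 / (3 * \<alpha>2)"] e \<alpha>1_pos \<alpha>2_pos
    by (auto elim!: eventually_mono simp: field_simps)
  with eventually_ge_at_top[of 1] eventually_affine_le_linear[OF p C,
      of "K + \<kappa> + (L * \<kappa> + 2 * (1 + r)) / \<epsilon>" "1 + L / \<epsilon>" "2 * u / \<epsilon>"]
  show ?thesis
  proof eventually_elim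
    case (elim n)
    let ?p = "measure_pmf.prob (map_pmf fst (P1 n)) (low_ratio_set P1 P2 n \<gamma>)"
    have "measure_pmf.prob (map_pmf fst (P1 n)) (- upper_good_set n \<epsilon> c) \<le> ?p + \<kappa>"
      using prob_outside_upper_good_set_le[of n \<epsilon> \<gamma> c] elim e c by simp
    then have "H_s_eps_under P1 P n \<epsilon> \<le> H_s_eps P1 n (\<epsilon> / 3)
        + ennreal (K + (?p + \<kappa>) + (1 / \<epsilon>) * ((2 * (real n * u) + L) * (?p + \<kappa>) + (1 + r) * (real n * d + 2)))"
      using H_s_eps_under_mixture_le[of n \<epsilon> u c d "?p + \<kappa>"] elim e u c d
      by (simp add: K_def L_def r_def add.assoc)
    also have "K + (?p + \<kappa>) + (1 / \<epsilon>) * ((2 * (real n * u) + L) * (?p + \<kappa>) + (1 + r) * (real n * d + 2))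
        = K + \<kappa> + (L * \<kappa> + 2 * (1 + r)) / \<epsilon> + (1 + L / \<epsilon>) * ?p + real n * (2 * u / \<epsilon> * ?p + C)"
      using e by (simp add: C_def field_simps)
    finally have bound: "H_s_eps_under P1 P n \<epsilon> \<le> H_s_eps P1 n (\<epsilon> / 3) + ennreal (K + \<kappa> + (L * \<kappa> + 2 * (1 + r)) / \<epsilon>
        + (1 + L / \<epsilon>) * ?p + real n * (2 * u / \<epsilon> * ?p + C))" .
    show ?case
      by (rule order_trans[OF bound]) (intro add_left_mono ennreal_leI elim(2))
  qed
qed

lemma eventually_H_s_eps_under_mixture_le:
  assumes e: "0 < \<epsilon>" "\<epsilon> < 1" and \<eta>: "0 < \<eta>"
  shows "\<forall>\<^sub>F n in sequentially. H_s_eps_under P1 P n \<epsilon> \<le> H_s_eps P1 n (\<epsilon> / 3) + ennreal (real n * \<eta>)"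
proof -
  define r where "r = \<alpha>2 / \<alpha>1"
  define d where "d = \<epsilon> * \<eta> / (4 * (1 + r))"
  have r: "0 \<le> r"
    using \<alpha>1_pos \<alpha>2_pos by (simp add: r_def)
  then have d: "0 < d"
    using e \<eta> unfolding d_def by (intro divide_pos_pos) auto
  obtain u where u: "0 \<le> u" "UI_tail P1 u \<le> ennreal d" "UI_tail P2 u \<le> ennreal d"
    using ex_UI_tail_le[OF UI1 UI2 d] by blast
  define \<kappa> where "\<kappa> = \<epsilon> * \<eta> / (8 * (u + 1))"
  have "0 < \<kappa>"
    unfolding \<kappa>_def using e \<eta> u by (intro divide_pos_pos) auto
  then obtain c where c: "0 \<le> c" "2 powr (-c) \<le> \<epsilon> * \<kappa> / 3"
    using ex_powr_neg_le[of "\<epsilon> * \<kappa> / 3"] e by auto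
  have "2 * u * \<kappa> / \<epsilon> = \<eta> / 4 * (u / (u + 1))"
    using e u unfolding \<kappa>_def by (simp add: divide_simps add_pos_nonneg)
  also have "\<dots> \<le> \<eta> / 4"
    using \<eta> u by (intro mult_left_le) auto
  finally have "2 * u * \<kappa> / \<epsilon> \<le> \<eta> / 4" .
  moreover have "(1 + r) * d / \<epsilon> = \<eta> / 4"
    using e r unfolding d_def by (simp add: divide_simps add_pos_nonneg)
  ultimately have "(2 * u * \<kappa> + (1 + r) * d) / \<epsilon> \<le> \<eta> / 4 + \<eta> / 4"
    unfolding add_divide_distrib by (intro add_mono) auto
  also have "\<dots> < \<eta>"
    using \<eta> by simp
  finally have "(2 * u * \<kappa> + (1 + r) * d) / \<epsilon> < \<eta>" .
  moreover have "3 / \<epsilon> * 2 powr (-c) \<le> \<kappa>"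
    using c e by (simp add: field_simps)
  ultimately show ?thesis
    using e u c d by (intro eventually_H_s_eps_under_mixture_le_of_rate) (auto simp: r_def)
qed

lemma eventually_H_s_eps_le_under_mixture:
  assumes e: "0 < \<epsilon>" "\<epsilon> < 1" and \<eta>: "0 < \<eta>"
  shows "\<forall>\<^sub>F n in sequentially. H_s_eps P1 n \<epsilon> \<le> H_s_eps_under P1 P n (\<epsilon> / 3) + ennreal (real n * \<eta>)"
proof -
  obtain \<gamma> where \<gamma>: "0 < \<gamma>"
    and p: "(\<lambda>n. measure_pmf.prob (map_pmf fst (P1 n)) (low_ratio_set P1 P2 n \<gamma>)) \<longlonglongrightarrow> 0"
    using ex_prob_low_ratio_set_tendsto_0[OF divergence12] by blast
  define d where "d = \<epsilon> * \<eta> / 2"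
  have d: "0 < d"
    using e \<eta> by (simp add: d_def)
  obtain u where u: "0 \<le> u" "UI_tail P1 u \<le> ennreal d"
    using ex_UI_tail_le[OF UI1 UI2 d] by blast
  obtain c where c: "0 \<le> c" "2 powr (-c) \<le> \<epsilon> / 3"
    using ex_powr_neg_le[of "\<epsilon> / 3"] e by auto
  have C: "d / \<epsilon> < \<eta>"
    using e \<eta> by (simp add: d_def)
  have arith: "2 + c + q + (1 / \<epsilon>) * (real n * u * q + real n * d) = 2 + c + 1 * q + real n * (u / \<epsilon> * q + d / \<epsilon>)"
    for n q using e by (simp add: field_simps)
  have "\<forall>\<^sub>F n in sequentially. \<alpha>2 * 2 powr (- (real n * \<gamma>)) \<le> \<alpha>1"
    using eventually_powr_neg_le[OF \<gamma>, of "\<alpha>1 / \<alpha>2"] \<alpha>1_pos \<alpha>2_pos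
    by (auto elim!: eventually_mono simp: field_simps)
  with eventually_ge_at_top[of 1] eventually_affine_le_linear[OF p C, of "2 + c" 1 "u / \<epsilon>"]
  show ?thesis
  proof eventually_elim
    case (elim n)
    let ?p = "measure_pmf.prob (map_pmf fst (P1 n)) (low_ratio_set P1 P2 n \<gamma>)"
    have "H_s_eps P1 n \<epsilon> \<le> H_s_eps_under P1 P n (\<epsilon> / 3) + ennreal (2 + c + ?p + (1 / \<epsilon>) * (real n * u * ?p + real n * d))"
      using H_s_eps_le_under_mixture[of n \<epsilon> u c d ?p] prob_outside_lower_good_set_le[of n \<gamma>] elim e u c d
      by simp
    also have "2 + c + ?p + (1 / \<epsilon>) * (real n * u * ?p + real n * d) = 2 + c + 1 * ?p + real n * (u / \<epsilon> * ?p + d / \<epsilon>)"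
      using arith .
    finally have bound: "H_s_eps P1 n \<epsilon> \<le> H_s_eps_under P1 P n (\<epsilon> / 3)
        + ennreal (2 + c + 1 * ?p + real n * (u / \<epsilon> * ?p + d / \<epsilon>))" .
    show ?case
      by (rule order_trans[OF bound]) (intro add_left_mono ennreal_leI elim(2))
  qed
qed

lemma limsup_H_s_eps_mixture_le:
  assumes e: "0 < \<epsilon>" "\<epsilon> < 1"
  shows "limsup (\<lambda>n. ennreal (1 / real n) * H_s_eps P n \<epsilon>)
    \<le> limsup (\<lambda>n. ennreal (\<alpha>1 / real n) * H_s_eps P1 n (\<epsilon> / 3) + ennreal (\<alpha>2 / real n) * H_s_eps P2 n (\<epsilon> / 3))"
proof (rule Limsup_le_Limsup_of_eventually_le_plus)
  interpret swapped: separated_mixture P2 P1 P \<alpha>2 \<alpha>1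
    by (rule swap_separated)
  fix \<eta> :: real
  assume \<eta>: "0 < \<eta>"
  from eventually_H_s_eps_under_mixture_le[OF e \<eta>] swapped.eventually_H_s_eps_under_mixture_le[OF e \<eta>]
    eventually_ge_at_top[of 1]
  show "\<forall>\<^sub>F n in sequentially. ennreal (1 / real n) * H_s_eps P n \<epsilon>
      \<le> ennreal (\<alpha>1 / real n) * H_s_eps P1 n (\<epsilon> / 3) + ennreal (\<alpha>2 / real n) * H_s_eps P2 n (\<epsilon> / 3) + ennreal \<eta>"
  proof eventually_elim
    case (elim n)
    have "H_s_eps P n \<epsilon> \<le> ennreal \<alpha>1 * (H_s_eps P1 n (\<epsilon> / 3) + ennreal (real n * \<eta>))
        + ennreal \<alpha>2 * (H_s_eps P2 n (\<epsilon> / 3) + ennreal (real n * \<eta>))"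
      unfolding H_s_eps_mixture using elim by (intro add_mono mult_left_mono) auto
    also have "\<dots> = ennreal \<alpha>1 * H_s_eps P1 n (\<epsilon> / 3) + ennreal \<alpha>2 * H_s_eps P2 n (\<epsilon> / 3) + ennreal (real n * \<eta>)"
      using \<eta> by (intro ennreal_convex_combination_plus) simp
    finally have "ennreal (1 / real n) * H_s_eps P n \<epsilon> \<le> ennreal (1 / real n) * \<dots>"
      by (rule mult_left_mono) simp
    then show ?case
      using \<alpha>1_pos \<alpha>2_pos \<eta> elim(3)
      by (simp add: distrib_left ennreal_inverse_n_mult ennreal_inverse_n_mult_n)
  qed
qed

lemma limsup_H_s_eps_components_le:
  assumes e: "0 < \<epsilon>" "\<epsilon> < 1"
  shows "limsup (\<lambda>n. ennreal (\<alpha>1 / real n) * H_s_eps P1 n \<epsilon> + ennreal (\<alpha>2 / real n) * H_s_eps P2 n \<epsilon>)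
    \<le> limsup (\<lambda>n. ennreal (1 / real n) * H_s_eps P n (\<epsilon> / 3))"
proof (rule Limsup_le_Limsup_of_eventually_le_plus)
  interpret swapped: separated_mixture P2 P1 P \<alpha>2 \<alpha>1
    by (rule swap_separated)
  fix \<eta> :: real
  assume \<eta>: "0 < \<eta>"
  from eventually_H_s_eps_le_under_mixture[OF e \<eta>] swapped.eventually_H_s_eps_le_under_mixture[OF e \<eta>]
    eventually_ge_at_top[of 1]
  show "\<forall>\<^sub>F n in sequentially. ennreal (\<alpha>1 / real n) * H_s_eps P1 n \<epsilon> + ennreal (\<alpha>2 / real n) * H_s_eps P2 n \<epsilon>
      \<le> ennreal (1 / real n) * H_s_eps P n (\<epsilon> / 3) + ennreal \<eta>"
  proof eventually_elim
    case (elim n)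
    have "ennreal \<alpha>1 * H_s_eps P1 n \<epsilon> + ennreal \<alpha>2 * H_s_eps P2 n \<epsilon>
        \<le> ennreal \<alpha>1 * (H_s_eps_under P1 P n (\<epsilon> / 3) + ennreal (real n * \<eta>))
          + ennreal \<alpha>2 * (H_s_eps_under P2 P n (\<epsilon> / 3) + ennreal (real n * \<eta>))"
      using elim by (intro add_mono mult_left_mono) auto
    also have "\<dots> = H_s_eps P n (\<epsilon> / 3) + ennreal (real n * \<eta>)"
      unfolding H_s_eps_mixture using \<eta> by (intro ennreal_convex_combination_plus) simp
    finally have "ennreal (1 / real n) * (ennreal \<alpha>1 * H_s_eps P1 n \<epsilon> + ennreal \<alpha>2 * H_s_eps P2 n \<epsilon>)
        \<le> ennreal (1 / real n) * (H_s_eps P n (\<epsilon> / 3) + ennreal (real n * \<eta>))"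
      by (rule mult_left_mono) simp
    then show ?case
      using \<alpha>1_pos \<alpha>2_pos \<eta> elim(3)
      by (simp add: distrib_left ennreal_inverse_n_mult ennreal_inverse_n_mult_n)
  qed
qed

end

theorem theorem11:
  fixes P1 P2 P :: "nat \<Rightarrow> ('a::countable list \<times> 'b::countable list) pmf"
    and \<alpha>1 \<alpha>2 :: real
  assumes "gen_source P1" and "gen_source P2"
    and "unif_integrable P1" and "unif_integrable P2"
    and "\<alpha>1 > 0" and "\<alpha>2 > 0" and "\<alpha>1 + \<alpha>2 = 1"
    and "\<And>n z. pmf (P n) z = \<alpha>1 * pmf (P1 n) z + \<alpha>2 * pmf (P2 n) z"
    and "spec_inf_div P1 P2 > 0" and "spec_inf_div P2 P1 > 0"
  shows "H_s P = Lim (at_right 0) (\<lambda>\<epsilon>. limsup (\<lambda>n.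
           ennreal (\<alpha>1 / real n) * H_s_eps P1 n \<epsilon> + ennreal (\<alpha>2 / real n) * H_s_eps P2 n \<epsilon>))"
proof -
  interpret separated_mixture P1 P2 P \<alpha>1 \<alpha>2
    using assms by unfold_locales auto
  show ?thesis
    unfolding H_s_def
  proof (rule Lim_at_right_0_eq_of_interleaved)
    show "limsup (\<lambda>n. ennreal (1 / real n) * H_s_eps P n e') \<le> limsup (\<lambda>n. ennreal (1 / real n) * H_s_eps P n e)"
      if "0 < e" "e \<le> e'" "e' < 1" for e e'
      using H_s_eps_antimono[OF that] by (intro Limsup_mono always_eventually allI mult_left_mono) auto
    show "limsup (\<lambda>n. ennreal (\<alpha>1 / real n) * H_s_eps P1 n e' + ennreal (\<alpha>2 / real n) * H_s_eps P2 n e')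
        \<le> limsup (\<lambda>n. ennreal (\<alpha>1 / real n) * H_s_eps P1 n e + ennreal (\<alpha>2 / real n) * H_s_eps P2 n e)"
      if "0 < e" "e \<le> e'" "e' < 1" for e e'
      using H_s_eps_antimono[OF that] by (intro Limsup_mono always_eventually allI add_mono mult_left_mono) auto
  qed (use limsup_H_s_eps_mixture_le limsup_H_s_eps_components_le in auto)
qed

end
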